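(* Let $p$ be an odd prime. Every nilpotent matrix $A\in\mathfrak{gl}_2(\mathbb{Z}_p)$ is multiplicatively-similar to precisely one of the matrices $\begin{pmatrix}0&0\\0&0\end{pmatrix}$ or $p^s\begin{pmatrix}0&0\\1&0\end{pmatrix}$, $s\in\mathbb{N}_0$. Let $\rho\in\mathbb{Z}_p^*$ be not a square modulo $p$. Then every non-nilpotent matrix $A\in\mathfrak{gl}_2(\mathbb{Z}_p)$ is multiplicatively-similar to precisely one matrix of the form $p^sA_0$, where $s\in\mathbb{N}_0$ and $A_0$ is one of the following core matrices: (1) $\begin{pmatrix}1&0\\0&1\end{pmatrix}$; (2) $\begin{pmatrix}1&0\\0&1\end{pmatrix}+p^r\begin{pmatrix}0&d\\1&0\end{pmatrix}$, where $r\in\mathbb{N}$ and $d\in\mathbb{Z}_p$; (3) $\begin{pmatrix}0&d\\1&p^r\end{pmatrix}$, where $r\in\mathbb{N}_0$ and $d\in\mathbb{Z}_p$; (4) $\begin{pmatrix}0&p^r\\1&0\end{pmatrix}$ or $\begin{pmatrix}0&\rho p^r\\1&0\end{pmatrix}$, where $r\in\mathbb{N}_0$.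
   Context: Two matrices $A,A'\in\mathfrak{gl}_2(\mathbb{Z}_p)$ are multiplicatively-similar if $A'=uB^{-1}AB$ for some $u\in\mathbb{Z}_p^*$ and $B\in\mathrm{GL}_2(\mathbb{Z}_p)$. $\mathbb{N}=\{1,2,\ldots\}$, $\mathbb{N}_0=\mathbb{N}\cup\{0\}$. *)

theory Defs
  imports "HOL-Number_Theory.Number_Theory"
begin

text \<open>The p-adic integers Z_p, realised as the inverse limit of the rings Z/p^n Z:
  an element is a coherent sequence of canonical residues x n in [0, p^n).\<close>

type_synonym padic = "nat \<Rightarrow> int"

definition padic :: "int \<Rightarrow> padic set" where
  "padic p = {x. \<forall>n. 0 \<le> x n \<and> x n < p ^ n \<and> x (Suc n) mod p ^ n = x n}"

definition pint :: "int \<Rightarrow> int \<Rightarrow> padic" where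
  "pint p k = (\<lambda>n. k mod p ^ n)"

definition pzero :: "int \<Rightarrow> padic" where "pzero p = pint p 0"
definition pone :: "int \<Rightarrow> padic" where "pone p = pint p 1"

definition padd :: "int \<Rightarrow> padic \<Rightarrow> padic \<Rightarrow> padic" where
  "padd p x y = (\<lambda>n. (x n + y n) mod p ^ n)"

definition pmul :: "int \<Rightarrow> padic \<Rightarrow> padic \<Rightarrow> padic" where
  "pmul p x y = (\<lambda>n. (x n * y n) mod p ^ n)"

definition ppow :: "int \<Rightarrow> nat \<Rightarrow> padic" where
  "ppow p s = pint p (p ^ s)"

definition punit :: "int \<Rightarrow> padic \<Rightarrow> bool" where
  "punit p u \<longleftrightarrow> u \<in> padic p \<and> (\<exists>v \<in> padic p. pmul p u v = pone p)"

text \<open>2x2 matrices over Z_p: (a,b,c,d) stands for the matrix with rows (a b) and (c d).\<close>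

type_synonym pmat = "padic \<times> padic \<times> padic \<times> padic"

definition mcarrier :: "int \<Rightarrow> pmat \<Rightarrow> bool" where
  "mcarrier p A = (case A of (a,b,c,d) \<Rightarrow> a \<in> padic p \<and> b \<in> padic p \<and> c \<in> padic p \<and> d \<in> padic p)"

fun mmul :: "int \<Rightarrow> pmat \<Rightarrow> pmat \<Rightarrow> pmat" where
  "mmul p (a,b,c,d) (e,f,g,h) =
     (padd p (pmul p a e) (pmul p b g), padd p (pmul p a f) (pmul p b h),
      padd p (pmul p c e) (pmul p d g), padd p (pmul p c f) (pmul p d h))"

fun madd :: "int \<Rightarrow> pmat \<Rightarrow> pmat \<Rightarrow> pmat" where
  "madd p (a,b,c,d) (e,f,g,h) = (padd p a e, padd p b f, padd p c g, padd p d h)"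

fun msmul :: "int \<Rightarrow> padic \<Rightarrow> pmat \<Rightarrow> pmat" where
  "msmul p u (a,b,c,d) = (pmul p u a, pmul p u b, pmul p u c, pmul p u d)"

definition mzero :: "int \<Rightarrow> pmat" where
  "mzero p = (pzero p, pzero p, pzero p, pzero p)"

definition mone :: "int \<Rightarrow> pmat" where
  "mone p = (pone p, pzero p, pzero p, pone p)"

fun mpow :: "int \<Rightarrow> pmat \<Rightarrow> nat \<Rightarrow> pmat" where
  "mpow p A 0 = mone p"
| "mpow p A (Suc k) = mmul p (mpow p A k) A"

definition mnilpotent :: "int \<Rightarrow> pmat \<Rightarrow> bool" where
  "mnilpotent p A \<longleftrightarrow> (\<exists>k. mpow p A k = mzero p)"

definition msim :: "int \<Rightarrow> pmat \<Rightarrow> pmat \<Rightarrow> bool" where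
  "msim p A A' \<longleftrightarrow> (\<exists>u B Binv. punit p u \<and> mcarrier p B \<and> mcarrier p Binv \<and>
      mmul p B Binv = mone p \<and> mmul p Binv B = mone p \<and>
      A' = msmul p u (mmul p (mmul p Binv A) B))"

definition nil_normal :: "int \<Rightarrow> pmat set" where
  "nil_normal p = {mzero p} \<union>
     {msmul p (ppow p s) (pzero p, pzero p, pone p, pzero p) | s. True}"

definition core :: "int \<Rightarrow> padic \<Rightarrow> pmat set" where
  "core p \<rho> =
     {mone p}
   \<union> {madd p (mone p) (msmul p (ppow p r) (pzero p, d, pone p, pzero p)) | r d. r \<ge> 1 \<and> d \<in> padic p}
   \<union> {(pzero p, d, pone p, ppow p r) | r d. d \<in> padic p}
   \<union> {(pzero p, ppow p r, pone p, pzero p) | r. True}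
   \<union> {(pzero p, pmul p \<rho> (ppow p r), pone p, pzero p) | r. True}"

definition nonnil_normal :: "int \<Rightarrow> padic \<Rightarrow> pmat set" where
  "nonnil_normal p \<rho> = {msmul p (ppow p s) A0 | s A0. A0 \<in> core p \<rho>}"

end

theory Submission
  imports Defs
begin

text \<open>Write a nonzero matrix as \<open>A = p ^ s A0\<close> with \<open>A0\<close> primitive; \<open>s\<close> is a similarity invariant,
  being the largest \<open>k\<close> with \<open>A \<equiv> 0 (mod p ^ k)\<close>. If \<open>A0\<close> is not scalar modulo \<open>p\<close>, it has a
  cyclic vector and is therefore conjugate to its companion matrix \<open>(0 -det; 1 tr)\<close>. Scaling by a
  unit \<open>u\<close> turns \<open>(tr, det)\<close> into \<open>(u tr, u\<^sup>2 det)\<close>; this normalises a nonzero trace to \<open>p ^ r\<close>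
  (type (3)) and, for traceless \<open>A0\<close>, the determinant to \<open>-p ^ r\<close> times \<open>1\<close> or \<open>\<rho>\<close>, which by
  Hensel's lemma represent the two square classes of units (type (4)). If \<open>A0\<close> is scalar modulo
  \<open>p\<close>, its trace is a unit because \<open>p\<close> is odd; rescaled to trace \<open>2\<close>, it is \<open>1\<close> or \<open>1 + p ^ r M1\<close>
  with \<open>M1\<close> primitive and traceless, and the companion form of \<open>M1\<close> gives type (2). Nilpotent
  matrices are those with \<open>tr = det = 0\<close>, whose companion form is \<open>(0 0; 1 0)\<close>.

  For uniqueness, the levels \<open>k\<close> at which a matrix is scalar modulo \<open>p ^ k\<close>, together with trace
  and determinant up to the factors \<open>u\<close> and \<open>u\<^sup>2\<close>, separate all the normal forms.\<close>

locale odd_prime =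
  fixes p :: int
  assumes prime: "prime p" and odd: "odd p"
begin

lemma p_gt_1: "p > 1"
  using prime prime_gt_1_int by blast

lemma p_nonzero [simp]: "p \<noteq> 0"
  using p_gt_1 by simp

lemma one_mod_p [simp]: "1 mod p = 1"
  using p_gt_1 by simp

lemma p_power_pos [simp]: "p ^ n > 0"
  using p_gt_1 by simp

lemma p_power_nonzero [simp]: "p ^ n \<noteq> 0"
  using p_gt_1 by simp

lemma p_gt_2: "p > 2"
  using odd p_gt_1 by (cases "p = 2") auto

lemma p_not_dvd_2: "\<not> p dvd 2"
  using p_gt_2 zdvd_imp_le by fastforce

lemma p_dvd_mult_iff: "p dvd a * b \<longleftrightarrow> p dvd a \<or> p dvd b"
  using prime prime_dvd_mult_iff by blast

lemma mod_p_eq_0_imp_eq: "0 \<le> x \<Longrightarrow> x < p \<Longrightarrow> 0 \<le> y \<Longrightarrow> y < p \<Longrightarrow> (x - y) mod p = 0 \<Longrightarrow> x = y"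
  using cong_less_imp_eq_int[of x p y] by (simp add: cong_iff_dvd_diff dvd_eq_mod_eq_0)

subsection \<open>The ring of p-adic integers\<close>

lemma padic_range: "x \<in> padic p \<Longrightarrow> 0 \<le> x n \<and> x n < p ^ n"
  unfolding padic_def by blast

lemma padic_mod_self [simp]: "x \<in> padic p \<Longrightarrow> x n mod p ^ n = x n"
  using padic_range[of x n] by simp

lemma padic_Suc_mod [simp]: "x \<in> padic p \<Longrightarrow> x (Suc n) mod p ^ n = x n"
  unfolding padic_def by blast

lemma padic_at_0 [simp]: "x \<in> padic p \<Longrightarrow> x 0 = 0"
  using padic_range[of x 0] by simp

lemma padic_mod_power:
  assumes "x \<in> padic p" "m \<le> n"
  shows "x n mod p ^ m = x m"
  using assms(2)
proof (induction n rule: dec_induct)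
  case (step n)
  have "x (Suc n) mod p ^ m = x (Suc n) mod p ^ n mod p ^ m"
    using step.hyps by (simp add: mod_mod_cancel le_imp_power_dvd)
  then show ?case using assms(1) step.IH by simp
qed (use assms(1) in simp)

lemma padic_mod_p: "x \<in> padic p \<Longrightarrow> 1 \<le> n \<Longrightarrow> x n mod p = x 1"
  using padic_mod_power[of x 1 n] by simp

lemma padic_residue_mod_p [simp]:
  "x \<in> padic p \<Longrightarrow> x 1 mod p = x 1" "x \<in> padic p \<Longrightarrow> x (Suc 0) mod p = x (Suc 0)"
  using padic_mod_self[of x 1] by simp_all

definition psub :: "padic \<Rightarrow> padic \<Rightarrow> padic" where
  "psub x y = (\<lambda>n. (x n - y n) mod p ^ n)"

definition pneg :: "padic \<Rightarrow> padic" where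
  "pneg x = (\<lambda>n. (- x n) mod p ^ n)"

lemma padic_ops_apply [simp]:
  "padd p x y n = (x n + y n) mod p ^ n"
  "pmul p x y n = (x n * y n) mod p ^ n"
  "psub x y n = (x n - y n) mod p ^ n"
  "pneg x n = (- x n) mod p ^ n"
  "pint p k n = k mod p ^ n"
  "pzero p n = 0"
  "pone p n = 1 mod p ^ n"
  "ppow p s n = p ^ s mod p ^ n"
  by (simp_all add: padd_def pmul_def psub_def pneg_def pint_def pzero_def pone_def ppow_def)

lemma padic_memI:
  assumes "\<And>n. f n = g n mod p ^ n" "\<And>n. g (Suc n) mod p ^ n = g n mod p ^ n"
  shows "f \<in> padic p"
  unfolding padic_def using assms by (auto simp: mod_mod_cancel le_imp_power_dvd)

lemma pint_closed [simp]: "pint p k \<in> padic p"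
  by (rule padic_memI[of _ "\<lambda>n. k"]) auto

lemma pzero_closed [simp]: "pzero p \<in> padic p"
  unfolding pzero_def by simp

lemma pone_closed [simp]: "pone p \<in> padic p"
  unfolding pone_def by simp

lemma ppow_closed [simp]: "ppow p s \<in> padic p"
  unfolding ppow_def by simp

lemma padd_closed [simp]: "x \<in> padic p \<Longrightarrow> y \<in> padic p \<Longrightarrow> padd p x y \<in> padic p"
  by (rule padic_memI[of _ "\<lambda>n. x n + y n"]) (simp_all add: mod_add_eq[of "x (Suc _)", symmetric])

lemma pmul_closed [simp]: "x \<in> padic p \<Longrightarrow> y \<in> padic p \<Longrightarrow> pmul p x y \<in> padic p"
  by (rule padic_memI[of _ "\<lambda>n. x n * y n"]) (simp_all add: mod_mult_eq[of "x (Suc _)", symmetric])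

lemma psub_closed [simp]: "x \<in> padic p \<Longrightarrow> y \<in> padic p \<Longrightarrow> psub x y \<in> padic p"
  by (rule padic_memI[of _ "\<lambda>n. x n - y n"]) (simp_all add: mod_diff_eq[of "x (Suc _)", symmetric])

lemma pneg_closed [simp]: "x \<in> padic p \<Longrightarrow> pneg x \<in> padic p"
  by (rule padic_memI[of _ "\<lambda>n. - x n"]) (simp_all add: mod_minus_eq[of "x (Suc _)", symmetric])

lemma pmul_commute: "pmul p x y = pmul p y x"
  by (rule ext) (simp add: mult.commute)

lemma pmul_assoc: "pmul p (pmul p x y) z = pmul p x (pmul p y z)"
  by (rule ext) (simp add: mod_simps mult.assoc)

lemma pmul_left_commute: "pmul p x (pmul p y z) = pmul p y (pmul p x z)"
  by (rule ext) (simp add: mod_simps algebra_simps)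

lemma pmul_pone [simp]: "x \<in> padic p \<Longrightarrow> pmul p (pone p) x = x" "x \<in> padic p \<Longrightarrow> pmul p x (pone p) = x"
  by (rule ext, simp add: mod_simps)+

lemma pmul_pzero [simp]: "pmul p (pzero p) x = pzero p" "pmul p x (pzero p) = pzero p"
  by (rule ext, simp)+

lemma padd_pzero [simp]: "x \<in> padic p \<Longrightarrow> padd p (pzero p) x = x" "x \<in> padic p \<Longrightarrow> padd p x (pzero p) = x"
  by (rule ext, simp)+

lemma pneg_pzero [simp]: "pneg (pzero p) = pzero p"
  by (rule ext) simp

lemma pneg_pneg: "x \<in> padic p \<Longrightarrow> pneg (pneg x) = x"
  by (rule ext) (simp add: mod_simps)

lemma pneg_pmul: "pneg (pmul p k x) = pmul p k (pneg x)"
  by (rule ext) (simp add: mod_simps)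

lemma pmul_psub_pzero: "pmul p k (psub (pzero p) e) = psub (pzero p) (pmul p k e)"
  by (rule ext) (simp add: mod_simps)

lemma ppow_add: "pmul p (ppow p a) (ppow p b) = ppow p (a + b)"
  by (rule ext) (simp add: mod_simps power_add)

lemma pone_neq_pzero: "pone p \<noteq> pzero p"
proof
  assume "pone p = pzero p"
  then have "pone p 1 = pzero p 1" by simp
  then show False using p_gt_1 by simp
qed

lemma psub_left_cancel:
  assumes "y \<in> padic p" "z \<in> padic p" "psub x y = psub x z"
  shows "y = z"
proof (rule ext)
  fix n
  have "[x n - y n = x n - z n] (mod p ^ n)"
    using fun_cong[OF assms(3), of n] by (simp add: cong_def)
  then have "[y n = z n] (mod p ^ n)"
    by (simp add: cong_iff_dvd_diff dvd_diff_commute)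
  then show "y n = z n"
    using padic_range[OF assms(1)] padic_range[OF assms(2)] cong_less_imp_eq_int by blast
qed

lemma padic_from_levels:
  assumes ex: "\<And>n. \<exists>y. P n y"
    and mod_closed: "\<And>n y. P n y \<Longrightarrow> P n (y mod p ^ n)"
    and unique: "\<And>n y z. P n y \<Longrightarrow> P n z \<Longrightarrow> 0 \<le> y \<Longrightarrow> y < p ^ n \<Longrightarrow> 0 \<le> z \<Longrightarrow> z < p ^ n \<Longrightarrow> y = z"
    and down: "\<And>n y. P (Suc n) y \<Longrightarrow> P n y"
  shows "\<exists>x\<in>padic p. \<forall>n. P n (x n)"
proof -
  define x where "x n = (THE y. 0 \<le> y \<and> y < p ^ n \<and> P n y)" for n
  have "\<exists>!y. 0 \<le> y \<and> y < p ^ n \<and> P n y" for n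
  proof -
    obtain y where "P n y" using ex by blast
    then have "0 \<le> y mod p ^ n \<and> y mod p ^ n < p ^ n \<and> P n (y mod p ^ n)"
      using mod_closed by simp
    then show ?thesis using unique by blast
  qed
  then have x: "0 \<le> x n \<and> x n < p ^ n \<and> P n (x n)" for n
    unfolding x_def by (rule theI')
  have "x (Suc n) mod p ^ n = x n" for n
  proof -
    have "P n (x (Suc n) mod p ^ n)" using x[of "Suc n"] down mod_closed by blast
    then show ?thesis using x[of n] unique[of n] by simp
  qed
  then have "x \<in> padic p" unfolding padic_def using x by blast
  then show ?thesis using x by blast
qed

lemma exists_last_level:
  assumes "Z 0" "\<exists>n. \<not> Z n"
  shows "\<exists>r. Z r \<and> \<not> Z (Suc r)"
proof (rule ccontr)
  assume "\<not> ?thesis"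
  then have "Z n" for n using assms(1) by (induction n) auto
  then show False using assms(2) by blast
qed

lemma padic_not_dvd: "x \<in> padic p \<Longrightarrow> x 1 \<noteq> 0 \<Longrightarrow> 1 \<le> n \<Longrightarrow> \<not> p dvd x n"
  using padic_mod_p[of x n] by (simp add: dvd_eq_mod_eq_0)

lemma padic_coprime_power: "x \<in> padic p \<Longrightarrow> x 1 \<noteq> 0 \<Longrightarrow> coprime (x n) (p ^ n)"
  using padic_not_dvd[of x n] prime prime_imp_coprime coprime_commute
  by (cases "n = 0") (auto simp: coprime_power_right_iff)

lemma padic_inverse_exists:
  assumes "x \<in> padic p" "x 1 \<noteq> 0"
  shows "\<exists>y\<in>padic p. pmul p x y = pone p"
proof -
  have "\<exists>y\<in>padic p. \<forall>n. [x n * y n = 1] (mod p ^ n)"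
  proof (rule padic_from_levels)
    fix n show "\<exists>y. [x n * y = 1] (mod p ^ n)"
      using cong_solve_coprime_int padic_coprime_power[OF assms] by blast
  next
    fix n y assume "[x n * y = 1] (mod p ^ n)"
    then show "[x n * (y mod p ^ n) = 1] (mod p ^ n)" by (simp add: cong_def mod_simps)
  next
    fix n y z assume h: "[x n * y = 1] (mod p ^ n)" "[x n * z = 1] (mod p ^ n)"
      "0 \<le> y" "y < p ^ n" "0 \<le> z" "z < p ^ n"
    have "[y * (x n * z) = z * (x n * y)] (mod p ^ n)" by (simp add: algebra_simps)
    then have "[y * 1 = z * 1] (mod p ^ n)"
      using h(1,2) by (meson cong_scalar_left cong_sym cong_trans)
    then show "y = z" using h cong_less_imp_eq_int by simp
  next
    fix n y assume "[x (Suc n) * y = 1] (mod p ^ Suc n)"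
    then have "[x (Suc n) * y = 1] (mod p ^ n)"
      by (rule cong_dvd_modulus) (simp add: le_imp_power_dvd)
    moreover have "[x (Suc n) = x n] (mod p ^ n)" using assms(1) by (simp add: cong_def)
    ultimately show "[x n * y = 1] (mod p ^ n)"
      by (meson cong_scalar_right cong_sym cong_trans)
  qed
  then obtain y where "y \<in> padic p" "\<forall>n. [x n * y n = 1] (mod p ^ n)" by blast
  moreover from this have "pmul p x y = pone p" by (intro ext) (simp add: cong_def)
  ultimately show ?thesis by blast
qed

lemma punit_iff: "punit p u \<longleftrightarrow> u \<in> padic p \<and> u 1 \<noteq> 0"
proof
  assume "punit p u"
  then obtain v where "u \<in> padic p" and uv: "pmul p u v = pone p" unfolding punit_def by blast
  moreover have "(u 1 * v 1) mod p = 1" using fun_cong[OF uv, of 1] p_gt_1 by simp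
  ultimately show "u \<in> padic p \<and> u 1 \<noteq> 0" by (metis mult_zero_left mod_0 zero_neq_one)
qed (use padic_inverse_exists in \<open>auto simp: punit_def\<close>)

lemma punit_closed: "punit p u \<Longrightarrow> u \<in> padic p"
  unfolding punit_def by blast

lemma punit_pone: "punit p (pone p)"
  unfolding punit_iff using p_gt_1 by simp

lemma punit_two: "punit p (padd p (pone p) (pone p))"
  unfolding punit_iff using p_gt_2 by simp

lemma punit_pmul: "punit p u \<Longrightarrow> punit p v \<Longrightarrow> punit p (pmul p u v)"
  unfolding punit_iff using padic_not_dvd[of u 1] padic_not_dvd[of v 1] p_dvd_mult_iff
  by (auto simp: dvd_eq_mod_eq_0)

lemma punit_inverse:
  assumes "punit p u"
  obtains v where "punit p v" "pmul p u v = pone p" "pmul p v u = pone p"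
proof -
  obtain v where v: "v \<in> padic p" "pmul p u v = pone p"
    using assms unfolding punit_def by blast
  then have "pmul p v u = pone p" by (simp add: pmul_commute)
  moreover from this have "punit p v" unfolding punit_def using v(1) punit_closed[OF assms] by blast
  ultimately show ?thesis using that v by blast
qed

lemma punit_left_cancel:
  assumes "punit p u" "x \<in> padic p" "y \<in> padic p" "pmul p u x = pmul p u y"
  shows "x = y"
proof -
  obtain v where "pmul p v u = pone p" using punit_inverse[OF assms(1)] by blast
  then show ?thesis
    using arg_cong[OF assms(4), of "pmul p v"] assms(2,3) by (simp add: pmul_assoc[symmetric])
qed

lemma ppow_left_cancel:
  assumes "x \<in> padic p" "y \<in> padic p" "pmul p (ppow p r) x = pmul p (ppow p r) y"
  shows "x = y"
proof (rule ext)
  fix n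
  have shift: "pmul p (ppow p r) z (n + r) = p ^ r * (z (n + r) mod p ^ n)" for z
    by (simp add: mod_simps power_add mod_mult_mult1)
  have "p ^ r * (x (n + r) mod p ^ n) = p ^ r * (y (n + r) mod p ^ n)"
    using fun_cong[OF assms(3), of "n + r"] by (simp only: shift)
  then have "x (n + r) mod p ^ n = y (n + r) mod p ^ n" using p_gt_1 by auto
  then show "x n = y n" using padic_mod_power[OF assms(1)] padic_mod_power[OF assms(2)] by simp
qed

lemma ppow_mul_punit_eq_0_iff:
  assumes "punit p w"
  shows "pmul p (ppow p k) w j = 0 \<longleftrightarrow> j \<le> k"
proof
  assume "j \<le> k"
  then have "p ^ k mod p ^ j = 0" by (simp add: le_imp_power_dvd)
  then show "pmul p (ppow p k) w j = 0" by (simp add: mod_mult_left_eq)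
next
  have w: "w \<in> padic p" "w 1 \<noteq> 0" using assms punit_iff by auto
  assume z: "pmul p (ppow p k) w j = 0"
  show "j \<le> k"
  proof (rule ccontr)
    assume "\<not> j \<le> k"
    then have "pmul p (ppow p k) w j mod p ^ Suc k = pmul p (ppow p k) w (Suc k)"
      by (intro padic_mod_power[OF pmul_closed[OF ppow_closed w(1)]]) simp
    then have "pmul p (ppow p k) w (Suc k) = 0" unfolding z by (simp only: mod_0)
    moreover have "pmul p (ppow p k) w (Suc k) = (p ^ k * w (Suc k)) mod (p ^ k * p)"
      by (simp only: padic_ops_apply mod_mult_left_eq power_Suc2)
    ultimately have "p ^ k * (w (Suc k) mod p) = 0" by (simp only: mod_mult_mult1)
    then show False using padic_mod_p[OF w(1), of "Suc k"] w(2) p_gt_1 by simp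
  qed
qed

lemma ppow_mul_punit_neq_pzero:
  assumes "punit p w"
  shows "pmul p (ppow p k) w \<noteq> pzero p"
proof
  assume "pmul p (ppow p k) w = pzero p"
  then have "pmul p (ppow p k) w (Suc k) = 0" by (simp only: padic_ops_apply(6))
  then show False using ppow_mul_punit_eq_0_iff[OF assms, of k "Suc k"] by simp
qed

lemma ppow_neq_pzero: "ppow p r \<noteq> pzero p"
  using ppow_mul_punit_neq_pzero[OF punit_pone, of r] by simp

lemma valuation_unique:
  assumes "punit p w" "punit p w'" "pmul p (ppow p r) w = pmul p (ppow p r') w'"
  shows "r = r' \<and> w = w'"
proof -
  have "j \<le> r \<longleftrightarrow> j \<le> r'" for j
    using ppow_mul_punit_eq_0_iff[OF assms(1), of r j] ppow_mul_punit_eq_0_iff[OF assms(2), of r' j]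
      assms(3) by simp
  then have "r = r'" by (meson le_antisym order_refl)
  then show ?thesis
    using ppow_left_cancel[OF punit_closed[OF assms(1)] punit_closed[OF assms(2)]] assms(3) by simp
qed

lemma padic_divide_ppow:
  assumes "x \<in> padic p" "x r = 0"
  shows "\<exists>y\<in>padic p. x = pmul p (ppow p r) y \<and> (x (Suc r) \<noteq> 0 \<longrightarrow> y 1 \<noteq> 0)"
proof -
  have dvd: "p ^ r dvd x k" if "r \<le> k" for k
    using padic_mod_power[OF assms(1) that] assms(2) by (simp add: dvd_eq_mod_eq_0)
  define y where "y n = (x (n + r) div p ^ r) mod p ^ n" for n
  have y: "y \<in> padic p"
  proof (rule padic_memI[of _ "\<lambda>n. x (n + r) div p ^ r"])
    fix n show "y n = x (n + r) div p ^ r mod p ^ n" unfolding y_def ..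
    obtain a where a: "x (Suc n + r) = p ^ r * a" using dvd[of "Suc n + r"] by auto
    obtain b where b: "x (n + r) = p ^ r * b" using dvd[of "n + r"] by auto
    have "x (Suc n + r) mod p ^ (n + r) = x (n + r)" using assms(1) by simp
    then have "p ^ r * (a mod p ^ n) = p ^ r * b"
      using a b by (simp add: power_add mult.commute mod_mult_mult1)
    then have "a mod p ^ n = b" using p_gt_1 by auto
    moreover have "x (Suc n + r) div p ^ r = a" "x (n + r) div p ^ r = b" using a b p_gt_1 by simp_all
    ultimately show "x (Suc n + r) div p ^ r mod p ^ n = x (n + r) div p ^ r mod p ^ n"
      by (metis mod_mod_trivial)
  qed
  have x: "x = pmul p (ppow p r) y"
  proof (rule ext)
    fix n
    obtain b where b: "x (n + r) = p ^ r * b" using dvd[of "n + r"] by auto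
    have "pmul p (ppow p r) y n = x (n + r) mod p ^ n"
      using p_gt_1 by (simp add: y_def b mod_simps)
    then show "x n = pmul p (ppow p r) y n" using padic_mod_power[OF assms(1), of n "n + r"] by simp
  qed
  have "y 1 \<noteq> 0" if "x (Suc r) \<noteq> 0"
  proof -
    obtain b where b: "x (Suc r) = p ^ r * b" using dvd[of "Suc r"] by auto
    have "0 \<le> x (Suc r)" "x (Suc r) < p ^ r * p"
      using padic_range[OF assms(1), of "Suc r"] by (auto simp: mult.commute)
    then have "0 < b" "b < p" using b that p_gt_1
      by (auto simp: zero_less_mult_iff mult_less_cancel_left zero_le_mult_iff)
    then show ?thesis by (simp add: y_def b)
  qed
  then show ?thesis using y x by blast
qed

lemma padic_valuation_factor:
  assumes "x \<in> padic p" "x \<noteq> pzero p"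
  obtains r w where "punit p w" "x = pmul p (ppow p r) w"
proof -
  have "\<exists>n. x n \<noteq> 0" using assms(2) by (auto simp: fun_eq_iff)
  then obtain r where "x r = 0" "x (Suc r) \<noteq> 0"
    using exists_last_level[of "\<lambda>n. x n = 0"] assms(1) by auto
  then show ?thesis using padic_divide_ppow[OF assms(1)] punit_iff that by metis
qed

lemma pmul_eq_pzero_iff:
  assumes "x \<in> padic p" "y \<in> padic p"
  shows "pmul p x y = pzero p \<longleftrightarrow> x = pzero p \<or> y = pzero p"
proof (rule ccontr)
  assume "\<not> ?thesis"
  then obtain r w t z where "punit p w" "x = pmul p (ppow p r) w" "punit p z" "y = pmul p (ppow p t) z"
    and xy: "pmul p x y = pzero p"
    using padic_valuation_factor assms by (metis pmul_pzero)
  moreover from this have "pmul p x y = pmul p (ppow p (r + t)) (pmul p w z)"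
    by (simp add: ppow_add[symmetric] pmul_assoc pmul_left_commute)
  ultimately show False using ppow_mul_punit_neq_pzero[OF punit_pmul] by metis
qed

subsection \<open>Squares of units\<close>

lemma nonresidue_mult_nonresidue:
  assumes "\<not> QuadRes p a" "\<not> QuadRes p b" "\<not> p dvd a" "\<not> p dvd b"
  shows "QuadRes p (a * b)"
proof (rule ccontr)
  define q where "q = nat p"
  have q: "p = int q" "prime q" "2 < q" using p_gt_2 prime unfolding q_def by auto
  define k where "k = (q - 1) div 2"
  have ab: "\<not> p dvd a * b" using assms(3,4) p_dvd_mult_iff by blast
  have Legendre: "Legendre x p = -1" if "\<not> QuadRes p x" "\<not> p dvd x" for x
    using that unfolding Legendre_def by (simp add: cong_0_iff)
  have euler: "[Legendre x p = x ^ k] (mod p)" for x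
    using euler_criterion[OF q(2,3), of x] q(1) k_def by simp
  have "[(-1) * (-1) = a ^ k * b ^ k] (mod p)"
    using cong_mult[OF euler[of a] euler[of b]] Legendre assms by simp
  then have "[1 = (a * b) ^ k] (mod p)" by (simp add: power_mult_distrib)
  moreover assume "\<not> QuadRes p (a * b)"
  then have "[-1 = (a * b) ^ k] (mod p)" using euler[of "a * b"] Legendre ab by simp
  ultimately have "[-1 = 1] (mod p)" by (metis cong_sym cong_trans)
  then show False using p_not_dvd_2 by (simp add: cong_iff_dvd_diff)
qed

lemma hensel_sqrt_mod_power:
  assumes r0: "[r0 ^ 2 = W 1] (mod p)" "\<not> p dvd r0"
    and W: "\<And>n. [W (Suc n) = W n] (mod p ^ n)"
  shows "1 \<le> n \<Longrightarrow> \<exists>y. [y ^ 2 = W n] (mod p ^ n) \<and> [y = r0] (mod p)"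
proof (induction n rule: dec_induct)
  case base then show ?case using r0(1) by auto
next
  case (step n)
  then obtain y where y: "[y ^ 2 = W n] (mod p ^ n)" "[y = r0] (mod p)" by blast
  then have "[y ^ 2 = W (Suc n)] (mod p ^ n)" using W[of n] by (meson cong_sym cong_trans)
  then obtain q where q: "W (Suc n) = y ^ 2 + p ^ n * q" by (metis cong_iff_lin)
  have "\<not> p dvd 2 * y" using y(2) r0(2) p_not_dvd_2 p_dvd_mult_iff by (metis cong_dvd_iff)
  then have "coprime (2 * y) p" using prime_imp_coprime[OF prime] coprime_commute by blast
  then obtain t0 where t0: "[2 * y * t0 = 1] (mod p)" using cong_solve_coprime_int by blast
  define t where "t = t0 * q"
  have "[2 * y * t = q] (mod p)"
    unfolding t_def using cong_scalar_right[OF t0, of q] by (simp add: ac_simps)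
  then obtain m where m: "2 * y * t = q + p * m" by (metis cong_iff_lin cong_sym)
  \<comment> \<open>Newton step: \<open>y + p ^ n t\<close> with \<open>2 y t \<equiv> q\<close> kills the error term \<open>p ^ n q\<close>.\<close>
  define y' where "y' = y + p ^ n * t"
  obtain n' where n': "n = Suc n'" using step.hyps by (cases n) auto
  have "y' ^ 2 - W (Suc n) = p ^ n * (2 * y * t - q) + p ^ n * p ^ n * t ^ 2"
    unfolding y'_def q by (simp add: power2_eq_square algebra_simps)
  also have "\<dots> = p ^ Suc n * (m + p ^ n' * t ^ 2)"
    using m n' by (simp add: algebra_simps)
  finally have "[y' ^ 2 = W (Suc n)] (mod p ^ Suc n)" by (simp add: cong_iff_dvd_diff)
  moreover have "[y' = y] (mod p)" unfolding y'_def using n' by (simp add: cong_iff_dvd_diff)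
  then have "[y' = r0] (mod p)" using y(2) by (rule cong_trans)
  ultimately show ?case by blast
qed

lemma sqrt_mod_power_unique:
  assumes "\<not> p dvd r0" "[y = r0] (mod p)" "[z = r0] (mod p)" "[y ^ 2 = z ^ 2] (mod p ^ n)"
  shows "[y = z] (mod p ^ n)"
proof -
  have "p ^ n dvd (y - z) * (y + z)"
    using assms(4) by (simp add: cong_iff_dvd_diff power2_eq_square algebra_simps)
  moreover have "\<not> p dvd (y + z)"
  proof
    assume "p dvd y + z"
    moreover have "[y + z = 2 * r0] (mod p)" using cong_add[OF assms(2,3)] by simp
    ultimately have "p dvd 2 * r0" by (metis cong_dvd_iff)
    then show False using assms(1) p_not_dvd_2 p_dvd_mult_iff by blast
  qed
  then have "coprime (y + z) (p ^ n)"
    using prime_imp_coprime[OF prime] coprime_commute coprime_power_right_iff by blast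
  ultimately have "p ^ n dvd (y - z)" using coprime_commute coprime_dvd_mult_left_iff by blast
  then show ?thesis by (simp add: cong_iff_dvd_diff)
qed

lemma padic_sqrt_exists:
  assumes w: "w \<in> padic p" "w 1 \<noteq> 0" "QuadRes p (w 1)"
  shows "\<exists>y\<in>padic p. pmul p y y = w"
proof -
  obtain r0 where r0: "[r0 ^ 2 = w 1] (mod p)" using w(3) unfolding QuadRes_def by blast
  have nr0: "\<not> p dvd r0"
  proof
    assume "p dvd r0"
    then have "p dvd r0 ^ 2" by (simp add: power2_eq_square)
    then show False using r0 padic_not_dvd[OF w(1,2), of 1] by (simp add: cong_dvd_iff)
  qed
  have W: "[w (Suc n) = w n] (mod p ^ n)" for n using w(1) by (simp add: cong_def)
  define P where "P n y \<longleftrightarrow> [y ^ 2 = w n] (mod p ^ n) \<and> (1 \<le> n \<longrightarrow> [y = r0] (mod p))" for n y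
  have "\<exists>y\<in>padic p. \<forall>n. P n (y n)"
  proof (rule padic_from_levels)
    fix n show "\<exists>y. P n y"
      using hensel_sqrt_mod_power[OF r0 nr0 W, of n] unfolding P_def by (cases "n = 0") auto
  next
    fix n y assume "P n y"
    then show "P n (y mod p ^ n)" unfolding P_def
      by (auto simp: cong_def power_mod mod_mod_cancel le_imp_power_dvd dest: le_imp_power_dvd[of 1 n p])
  next
    fix n y z assume h: "P n y" "P n z" "0 \<le> y" "y < p ^ n" "0 \<le> z" "z < p ^ n"
    show "y = z"
    proof (cases "n = 0")
      case False
      then have "[y = r0] (mod p)" "[z = r0] (mod p)" "[y ^ 2 = z ^ 2] (mod p ^ n)"
        using h(1,2) unfolding P_def by (auto intro: cong_sym cong_trans)
      then show ?thesis using sqrt_mod_power_unique[OF nr0] h(3-6) cong_less_imp_eq_int by blast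
    qed (use h in simp)
  next
    fix n y assume h: "P (Suc n) y"
    then have "[y ^ 2 = w (Suc n)] (mod p ^ n)" unfolding P_def
      by (meson cong_dvd_modulus le_imp_power_dvd le_SucI order_refl)
    then have "[y ^ 2 = w n] (mod p ^ n)" using W[of n] by (meson cong_trans)
    then show "P n y" using h unfolding P_def by auto
  qed
  then obtain y where "y \<in> padic p" "\<forall>n. [(y n) ^ 2 = w n] (mod p ^ n)" unfolding P_def by blast
  moreover from this have "pmul p y y = w"
    by (intro ext) (use w(1) in \<open>simp add: cong_def power2_eq_square\<close>)
  ultimately show ?thesis by blast
qed

lemma punit_sqrt_exists:
  assumes "punit p w" "QuadRes p (w 1)"
  obtains y where "punit p y" "pmul p y y = w"
proof -
  have w: "w \<in> padic p" "w 1 \<noteq> 0" using assms(1) punit_iff by auto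
  obtain y where y: "y \<in> padic p" "pmul p y y = w" using padic_sqrt_exists[OF w assms(2)] by blast
  have "w 1 = (y 1 * y 1) mod p" using fun_cong[OF y(2)[symmetric], of 1] by simp
  then have "y 1 \<noteq> 0" using w by auto
  then show ?thesis using that y punit_iff by blast
qed

lemma nonresidue_not_square:
  assumes "\<not> QuadRes p (\<rho> 1)"
  shows "\<rho> \<noteq> pmul p v v"
proof
  assume "\<rho> = pmul p v v"
  then have "[v 1 ^ 2 = \<rho> 1] (mod p)" by (simp add: cong_def power2_eq_square)
  then show False using assms unfolding QuadRes_def by blast
qed

lemma punit_square_class:
  assumes \<rho>: "punit p \<rho>" "\<not> QuadRes p (\<rho> 1)" and w: "punit p w"
  obtains u e where "punit p u" "e \<in> {pone p, \<rho>}" "pmul p (pmul p u u) w = e"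
proof (cases "QuadRes p (w 1)")
  case True
  obtain y where y: "punit p y" "pmul p y y = w" using punit_sqrt_exists[OF w True] by blast
  obtain u where u: "punit p u" "pmul p u y = pone p" using punit_inverse[OF y(1)] by metis
  have "pmul p (pmul p u u) w = pmul p (pmul p u y) (pmul p u y)"
    using y(2)[symmetric] by (simp add: pmul_assoc pmul_commute pmul_left_commute)
  also have "\<dots> = pone p" using u(2) by simp
  finally show ?thesis using that[OF u(1)] by blast
next
  case False
  obtain v where v: "punit p v" "pmul p w v = pone p" "pmul p v w = pone p"
    using punit_inverse[OF w] by blast
  have w1: "w 1 \<noteq> 0" "v 1 \<noteq> 0" "\<rho> 1 \<noteq> 0" using w v(1) \<rho>(1) punit_iff by auto
  have wv: "[w 1 * v 1 = 1] (mod p)" using fun_cong[OF v(2), of 1] by (simp add: cong_def)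
  have "\<not> QuadRes p (v 1)"
  proof
    assume "QuadRes p (v 1)"
    then obtain t where t: "[t ^ 2 = v 1] (mod p)" unfolding QuadRes_def by blast
    have "[(w 1 * t) ^ 2 = w 1 * (w 1 * v 1)] (mod p)"
      using cong_scalar_left[OF t, of "w 1 * w 1"] by (simp add: power2_eq_square ac_simps)
    also have "[w 1 * (w 1 * v 1) = w 1 * 1] (mod p)" using cong_scalar_left[OF wv] .
    finally show False using False unfolding QuadRes_def by auto
  qed
  then have "QuadRes p (\<rho> 1 * v 1)"
    using nonresidue_mult_nonresidue[OF \<rho>(2)] padic_not_dvd[of _ 1] w1 punit_closed \<rho>(1) v(1)
    by simp
  moreover have "[\<rho> 1 * v 1 = pmul p \<rho> v 1] (mod p)" by (simp add: cong_def)
  ultimately have "QuadRes p (pmul p \<rho> v 1)" unfolding QuadRes_def by (meson cong_trans)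
  then obtain y where y: "punit p y" "pmul p y y = pmul p \<rho> v"
    using punit_sqrt_exists[OF punit_pmul[OF \<rho>(1) v(1)]] by blast
  have "pmul p (pmul p y y) w = pmul p \<rho> (pmul p v w)" unfolding y(2) by (simp add: pmul_assoc)
  also have "\<dots> = \<rho>" using v(3) punit_closed[OF \<rho>(1)] by simp
  finally show ?thesis using that[OF y(1)] by blast
qed

lemma square_class_rep_unique:
  assumes \<rho>: "punit p \<rho>" "\<not> QuadRes p (\<rho> 1)" and u: "punit p u"
    and "a \<in> {pone p, \<rho>}" "a' \<in> {pone p, \<rho>}" "a' = pmul p (pmul p u u) a"
  shows "a' = a"
proof (rule ccontr)
  assume "a' \<noteq> a"
  then consider "a = pone p" "a' = \<rho>" | "a = \<rho>" "a' = pone p" using assms(4,5) by blast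
  then show False
  proof cases
    case 1
    then show False
      using assms(6) nonresidue_not_square[of \<rho>, OF \<rho>(2)] punit_closed[OF u] by (simp add: eq_commute)
  next
    case 2
    obtain v where v: "punit p v" "pmul p v u = pone p" using punit_inverse[OF u] by metis
    have "pmul p (pmul p u u) \<rho> = pone p" using assms(6) 2 by simp
    then have "pmul p v v = pmul p (pmul p v v) (pmul p (pmul p u u) \<rho>)"
      using punit_closed[OF v(1)] by simp
    also have "\<dots> = pmul p (pmul p (pmul p v u) (pmul p v u)) \<rho>"
      by (simp add: pmul_assoc pmul_commute pmul_left_commute)
    also have "\<dots> = \<rho>" using v(2) punit_closed[OF \<rho>(1)] by simp
    finally have "\<rho> = pmul p v v" ..
    then show False using nonresidue_not_square[of \<rho>, OF \<rho>(2)] by blast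
  qed
qed

subsection \<open>2x2 matrices over the p-adic integers\<close>

fun mtrace :: "pmat \<Rightarrow> padic" where
  "mtrace (a, b, c, d) = padd p a d"

fun mdet :: "pmat \<Rightarrow> padic" where
  "mdet (a, b, c, d) = psub (pmul p a d) (pmul p b c)"

fun madj :: "pmat \<Rightarrow> pmat" where
  "madj (a, b, c, d) = (d, pneg b, pneg c, a)"

definition companion :: "pmat \<Rightarrow> pmat" where
  "companion X = (pzero p, pneg (mdet X), pone p, mtrace X)"

text \<open>The matrix with columns \<open>v = (v1, v2)\<close> and \<open>X v\<close>.\<close>
fun cyclic_basis :: "pmat \<Rightarrow> padic \<Rightarrow> padic \<Rightarrow> pmat" where
  "cyclic_basis (a, b, c, d) v1 v2 =
     (v1, padd p (pmul p a v1) (pmul p b v2), v2, padd p (pmul p c v1) (pmul p d v2))"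

lemmas matrix_unfold = fun_eq_iff prod.inject padic_ops_apply mmul.simps msmul.simps madd.simps
  mtrace.simps mdet.simps madj.simps companion_def cyclic_basis.simps mone_def mzero_def mod_simps

lemma mcarrier_iff [simp]:
  "mcarrier p (a, b, c, d) \<longleftrightarrow> a \<in> padic p \<and> b \<in> padic p \<and> c \<in> padic p \<and> d \<in> padic p"
  by (simp add: mcarrier_def)

lemma mmul_closed [simp]: "mcarrier p X \<Longrightarrow> mcarrier p Y \<Longrightarrow> mcarrier p (mmul p X Y)"
  by (cases X rule: prod_cases4, cases Y rule: prod_cases4) simp

lemma msmul_closed [simp]: "u \<in> padic p \<Longrightarrow> mcarrier p X \<Longrightarrow> mcarrier p (msmul p u X)"
  by (cases X rule: prod_cases4) simp

lemma madd_closed [simp]: "mcarrier p X \<Longrightarrow> mcarrier p Y \<Longrightarrow> mcarrier p (madd p X Y)"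
  by (cases X rule: prod_cases4, cases Y rule: prod_cases4) simp

lemma mone_closed [simp]: "mcarrier p (mone p)"
  by (simp add: mone_def)

lemma mzero_closed [simp]: "mcarrier p (mzero p)"
  by (simp add: mzero_def)

lemma mpow_closed [simp]: "mcarrier p A \<Longrightarrow> mcarrier p (mpow p A k)"
  by (induction k) simp_all

lemma madj_closed [simp]: "mcarrier p X \<Longrightarrow> mcarrier p (madj X)"
  by (cases X rule: prod_cases4) simp

lemma cyclic_basis_closed [simp]:
  "mcarrier p X \<Longrightarrow> v1 \<in> padic p \<Longrightarrow> v2 \<in> padic p \<Longrightarrow> mcarrier p (cyclic_basis X v1 v2)"
  by (cases X rule: prod_cases4) simp

lemma mtrace_closed [simp]: "mcarrier p X \<Longrightarrow> mtrace X \<in> padic p"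
  by (cases X rule: prod_cases4) simp

lemma mdet_closed [simp]: "mcarrier p X \<Longrightarrow> mdet X \<in> padic p"
  by (cases X rule: prod_cases4) simp

lemma mmul_assoc: "mmul p (mmul p X Y) Z = mmul p X (mmul p Y Z)"
  by (cases X rule: prod_cases4, cases Y rule: prod_cases4, cases Z rule: prod_cases4)
     (simp only: matrix_unfold; intro conjI allI; rule arg_cong[where f = "\<lambda>t. t mod _"];
      simp add: algebra_simps)

lemma mmul_mone [simp]: "mcarrier p X \<Longrightarrow> mmul p (mone p) X = X" "mcarrier p X \<Longrightarrow> mmul p X (mone p) = X"
  by (cases X rule: prod_cases4, simp add: mone_def)+

lemma mmul_left_inverse: "mmul p X Y = mone p \<Longrightarrow> mcarrier p Z \<Longrightarrow> mmul p X (mmul p Y Z) = Z"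
  by (simp add: mmul_assoc[symmetric])

lemma msmul_pone [simp]: "mcarrier p X \<Longrightarrow> msmul p (pone p) X = X"
  by (cases X rule: prod_cases4) simp

lemma mmul_msmul_left: "mmul p (msmul p u X) Y = msmul p u (mmul p X Y)"
  by (cases X rule: prod_cases4, cases Y rule: prod_cases4)
     (simp only: matrix_unfold; intro conjI allI; rule arg_cong[where f = "\<lambda>t. t mod _"];
      simp add: algebra_simps)

lemma mmul_msmul_right: "mmul p X (msmul p u Y) = msmul p u (mmul p X Y)"
  by (cases X rule: prod_cases4, cases Y rule: prod_cases4)
     (simp only: matrix_unfold; intro conjI allI; rule arg_cong[where f = "\<lambda>t. t mod _"];
      simp add: algebra_simps)

lemma msmul_msmul: "msmul p u (msmul p v X) = msmul p (pmul p u v) X"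
  by (cases X rule: prod_cases4)
     (simp only: matrix_unfold; intro conjI allI; rule arg_cong[where f = "\<lambda>t. t mod _"];
      simp add: algebra_simps)

lemmas msmul_simps = mmul_msmul_left mmul_msmul_right msmul_msmul

lemma mmul_madd_conj:
  "mmul p (mmul p Y (madd p X X')) Z = madd p (mmul p (mmul p Y X) Z) (mmul p (mmul p Y X') Z)"
  by (cases X rule: prod_cases4, cases X' rule: prod_cases4, cases Y rule: prod_cases4,
      cases Z rule: prod_cases4)
     (simp only: matrix_unfold; intro conjI allI; rule arg_cong[where f = "\<lambda>t. t mod _"];
      simp add: algebra_simps)

lemma mtrace_mmul_commute: "mtrace (mmul p X Y) = mtrace (mmul p Y X)"
  by (cases X rule: prod_cases4, cases Y rule: prod_cases4)
     (simp only: matrix_unfold; intro conjI allI; rule arg_cong[where f = "\<lambda>t. t mod _"];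
      simp add: algebra_simps)

lemma mtrace_msmul: "mtrace (msmul p u X) = pmul p u (mtrace X)"
  by (cases X rule: prod_cases4)
     (simp only: matrix_unfold; intro conjI allI; rule arg_cong[where f = "\<lambda>t. t mod _"];
      simp add: algebra_simps)

lemma mtrace_madd: "mtrace (madd p X Y) = padd p (mtrace X) (mtrace Y)"
  by (cases X rule: prod_cases4, cases Y rule: prod_cases4)
     (simp only: matrix_unfold; intro conjI allI; rule arg_cong[where f = "\<lambda>t. t mod _"];
      simp add: algebra_simps)

lemma mdet_mmul: "mdet (mmul p X Y) = pmul p (mdet X) (mdet Y)"
  by (cases X rule: prod_cases4, cases Y rule: prod_cases4)
     (simp only: matrix_unfold; intro conjI allI; rule arg_cong[where f = "\<lambda>t. t mod _"];
      simp add: algebra_simps)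

lemma mdet_msmul: "mdet (msmul p u X) = pmul p (pmul p u u) (mdet X)"
  by (cases X rule: prod_cases4)
     (simp only: matrix_unfold; intro conjI allI; rule arg_cong[where f = "\<lambda>t. t mod _"];
      simp add: algebra_simps)

lemma mdet_mone [simp]: "mdet (mone p) = pone p"
  by (simp add: mone_def fun_eq_iff)

lemma madj_mmul: "mmul p X (madj X) = msmul p (mdet X) (mone p)" "mmul p (madj X) X = msmul p (mdet X) (mone p)"
  by (cases X rule: prod_cases4,
      simp only: matrix_unfold; intro conjI allI; rule arg_cong[where f = "\<lambda>t. t mod _"];
      simp add: algebra_simps)+

lemma cayley_hamilton: "mmul p X X = madd p (msmul p (mtrace X) X) (msmul p (pneg (mdet X)) (mone p))"
  by (cases X rule: prod_cases4)
     (simp only: matrix_unfold; intro conjI allI; rule arg_cong[where f = "\<lambda>t. t mod _"];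
      simp add: algebra_simps)

lemma cyclic_basis_companion: "mmul p X (cyclic_basis X v1 v2) = mmul p (cyclic_basis X v1 v2) (companion X)"
  by (cases X rule: prod_cases4) (simp only: matrix_unfold pneg_def; intro conjI allI;
      rule arg_cong[where f = "\<lambda>t. t mod _"]; simp add: algebra_simps)

lemma companion_msmul:
  "companion (msmul p u X) = (pzero p, pneg (pmul p (pmul p u u) (mdet X)), pone p, pmul p u (mtrace X))"
  by (simp add: companion_def mdet_msmul mtrace_msmul)

lemma minverse_exists:
  assumes "mcarrier p B" "punit p (mdet B)"
  obtains Binv where "mcarrier p Binv" "mmul p B Binv = mone p" "mmul p Binv B = mone p"
proof -
  obtain v where v: "punit p v" "pmul p (mdet B) v = pone p" "pmul p v (mdet B) = pone p"
    using punit_inverse[OF assms(2)] by blast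
  define Binv where "Binv = msmul p v (madj B)"
  have "mmul p B Binv = mone p" "mmul p Binv B = mone p"
    unfolding Binv_def using v punit_closed[OF v(1)] by (simp_all add: msmul_simps madj_mmul)
  moreover have "mcarrier p Binv" unfolding Binv_def using punit_closed[OF v(1)] assms(1) by simp
  ultimately show ?thesis using that by blast
qed

subsection \<open>Similarity and its invariants\<close>

lemma msimI:
  "punit p u \<Longrightarrow> mcarrier p B \<Longrightarrow> mcarrier p Binv \<Longrightarrow> mmul p B Binv = mone p \<Longrightarrow>
    mmul p Binv B = mone p \<Longrightarrow> C = msmul p u (mmul p (mmul p Binv A) B) \<Longrightarrow> msim p A C"
  unfolding msim_def by blast

lemma msimE:
  assumes "msim p A C"
  obtains u B Binv where "punit p u" "mcarrier p B" "mcarrier p Binv" "mmul p B Binv = mone p"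
    "mmul p Binv B = mone p" "C = msmul p u (mmul p (mmul p Binv A) B)"
  using assms unfolding msim_def by blast

lemma msim_closed: "msim p X Y \<Longrightarrow> mcarrier p X \<Longrightarrow> mcarrier p Y"
  by (elim msimE) (simp add: punit_closed)

lemma msim_sym:
  assumes "msim p A C" "mcarrier p A"
  shows "msim p C A"
proof -
  obtain u B Binv where h: "punit p u" "mcarrier p B" "mcarrier p Binv" "mmul p B Binv = mone p"
    "mmul p Binv B = mone p" "C = msmul p u (mmul p (mmul p Binv A) B)"
    using msimE[OF assms(1)] by blast
  obtain v where v: "punit p v" "pmul p v u = pone p" using punit_inverse[OF h(1)] by metis
  have "A = msmul p v (mmul p (mmul p B C) Binv)"
    unfolding h(6) using h(2-5) v assms(2) punit_closed[OF h(1)]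
    by (simp add: msmul_simps mmul_assoc mmul_left_inverse)
  then show ?thesis using msimI[OF v(1) h(3) h(2) h(5) h(4)] by blast
qed

lemma msim_trans:
  assumes "msim p X Y" "msim p Y Z" "mcarrier p X"
  shows "msim p X Z"
proof -
  obtain u B Binv where h: "punit p u" "mcarrier p B" "mcarrier p Binv" "mmul p B Binv = mone p"
    "mmul p Binv B = mone p" "Y = msmul p u (mmul p (mmul p Binv X) B)"
    using msimE[OF assms(1)] by blast
  obtain w C Cinv where g: "punit p w" "mcarrier p C" "mcarrier p Cinv" "mmul p C Cinv = mone p"
    "mmul p Cinv C = mone p" "Z = msmul p w (mmul p (mmul p Cinv Y) C)"
    using msimE[OF assms(2)] by blast
  have "mmul p (mmul p B C) (mmul p Cinv Binv) = mone p" "mmul p (mmul p Cinv Binv) (mmul p B C) = mone p"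
    using h g by (simp_all add: mmul_assoc mmul_left_inverse)
  moreover have "Z = msmul p (pmul p w u) (mmul p (mmul p (mmul p Cinv Binv) X) (mmul p B C))"
    unfolding g(6) h(6) by (simp add: msmul_simps mmul_assoc)
  ultimately show ?thesis using h g by (intro msimI) (simp_all add: punit_pmul)
qed

lemma msim_mtrace_mdet:
  assumes "msim p X Y" "mcarrier p X"
  obtains u where "punit p u" "mtrace Y = pmul p u (mtrace X)" "mdet Y = pmul p (pmul p u u) (mdet X)"
proof -
  obtain u B Binv where h: "punit p u" "mcarrier p B" "mcarrier p Binv" "mmul p B Binv = mone p"
    "mmul p Binv B = mone p" "Y = msmul p u (mmul p (mmul p Binv X) B)"
    using msimE[OF assms(1)] by blast
  have "mtrace (mmul p (mmul p Binv X) B) = mtrace (mmul p B (mmul p Binv X))"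
    by (rule mtrace_mmul_commute)
  also have "\<dots> = mtrace X" using h assms(2) by (simp add: mmul_left_inverse)
  finally have "mtrace Y = pmul p u (mtrace X)" unfolding h(6) by (simp add: mtrace_msmul)
  moreover have "mdet (mmul p (mmul p Binv X) B) = pmul p (mdet X) (mdet (mmul p Binv B))"
    by (simp add: mdet_mmul pmul_commute pmul_left_commute)
  then have "mdet Y = pmul p (pmul p u u) (mdet X)"
    unfolding h(6) using h(5) assms(2) by (simp add: mdet_msmul)
  ultimately show ?thesis using that h(1) by blast
qed

lemma companion_conj:
  assumes "mcarrier p X" "v1 \<in> padic p" "v2 \<in> padic p" "punit p (mdet (cyclic_basis X v1 v2))"
  obtains B Binv where "mcarrier p B" "mcarrier p Binv" "mmul p B Binv = mone p" "mmul p Binv B = mone p"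
    "mmul p (mmul p Binv X) B = companion X"
proof -
  define B where "B = cyclic_basis X v1 v2"
  have B: "mcarrier p B" unfolding B_def using assms by simp
  obtain Binv where Binv: "mcarrier p Binv" "mmul p B Binv = mone p" "mmul p Binv B = mone p"
    using minverse_exists[OF B] assms(4) unfolding B_def by blast
  have "mmul p (mmul p Binv X) B = mmul p Binv (mmul p B (companion X))"
    unfolding B_def by (simp add: mmul_assoc cyclic_basis_companion)
  also have "\<dots> = companion X" by (simp add: mmul_assoc[symmetric] Binv assms companion_def)
  finally show ?thesis using that B Binv by blast
qed

text \<open>A matrix is primitive, i.e.\ has a unit entry, iff \<open>\<not> mvanish 1 X\<close>.\<close>
fun mvanish :: "nat \<Rightarrow> pmat \<Rightarrow> bool" where
  "mvanish k (a, b, c, d) \<longleftrightarrow> a k = 0 \<and> b k = 0 \<and> c k = 0 \<and> d k = 0"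

fun mscalar_mod :: "nat \<Rightarrow> pmat \<Rightarrow> bool" where
  "mscalar_mod k (a, b, c, d) \<longleftrightarrow> b k = 0 \<and> c k = 0 \<and> a k = d k"

fun meq_mod :: "nat \<Rightarrow> pmat \<Rightarrow> pmat \<Rightarrow> bool" where
  "meq_mod k (a, b, c, d) (a', b', c', d') \<longleftrightarrow> a k = a' k \<and> b k = b' k \<and> c k = c' k \<and> d k = d' k"

lemma cyclic_vector_exists:
  assumes "mcarrier p X" "\<not> mscalar_mod 1 X"
  obtains v1 v2 where "v1 \<in> padic p" "v2 \<in> padic p" "punit p (mdet (cyclic_basis X v1 v2))"
proof -
  obtain a b c d where X: "X = (a, b, c, d)" by (cases X rule: prod_cases4)
  have m: "a \<in> padic p" "b \<in> padic p" "c \<in> padic p" "d \<in> padic p" using assms(1) X by auto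
  have r: "0 \<le> a 1 \<and> a 1 < p" "0 \<le> b 1 \<and> b 1 < p" "0 \<le> d 1 \<and> d 1 < p"
    using padic_range m by (metis power_one_right)+
  consider "c 1 \<noteq> 0" | "c 1 = 0" "b 1 \<noteq> 0" | "c 1 = 0" "b 1 = 0" "a 1 \<noteq> d 1"
    using assms(2) X by auto
  then show ?thesis
  proof cases
    case 1
    have "mdet (cyclic_basis X (pone p) (pzero p)) 1 = c 1" using m unfolding X by (simp add: mod_simps)
    then show ?thesis using that[of "pone p" "pzero p"] assms(1) 1 by (simp add: punit_iff)
  next
    case 2
    have "mdet (cyclic_basis X (pzero p) (pone p)) 1 = (- b 1) mod p" using m unfolding X by (simp add: mod_simps)
    moreover have "(- b 1) mod p \<noteq> 0" using mod_p_eq_0_imp_eq[of 0 "b 1"] r 2 by auto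
    ultimately show ?thesis using that[of "pzero p" "pone p"] assms(1) by (simp add: punit_iff)
  next
    case 3
    have "mdet (cyclic_basis X (pone p) (pone p)) 1 = (d 1 - a 1) mod p" using m 3 unfolding X by (simp add: mod_simps)
    moreover have "(d 1 - a 1) mod p \<noteq> 0" using mod_p_eq_0_imp_eq[of "d 1" "a 1"] r 3 by auto
    ultimately show ?thesis using that[of "pone p" "pone p"] assms(1) by (simp add: punit_iff)
  qed
qed

lemma mvanish_conj: "mvanish k X \<Longrightarrow> mvanish k (msmul p u (mmul p (mmul p Binv X) B))"
  by (cases X rule: prod_cases4, cases B rule: prod_cases4, cases Binv rule: prod_cases4) (simp add: mod_simps)

lemma meq_mod_conj:
  "meq_mod k X X' \<Longrightarrow> meq_mod k (msmul p u (mmul p (mmul p Binv X) B)) (msmul p u (mmul p (mmul p Binv X') B))"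
  by (cases X rule: prod_cases4, cases X' rule: prod_cases4, cases B rule: prod_cases4,
      cases Binv rule: prod_cases4) (simp only: mmul.simps msmul.simps meq_mod.simps padic_ops_apply)

lemma msim_mvanish: "msim p X Y \<Longrightarrow> mvanish k X \<Longrightarrow> mvanish k Y"
  by (elim msimE) (simp add: mvanish_conj)

lemma msim_mscalar_mod:
  assumes "msim p X Y" "mcarrier p X" "mscalar_mod k X"
  shows "mscalar_mod k Y"
proof -
  obtain u B Binv where h: "punit p u" "mcarrier p B" "mcarrier p Binv" "mmul p B Binv = mone p"
    "mmul p Binv B = mone p" "Y = msmul p u (mmul p (mmul p Binv X) B)"
    using msimE[OF assms(1)] by blast
  obtain a b c d where X: "X = (a, b, c, d)" by (cases X rule: prod_cases4)
  have a: "a \<in> padic p" using assms(2) X by simp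
  \<comment> \<open>modulo \<open>p ^ k\<close>, \<open>X\<close> agrees with the scalar matrix \<open>a\<close>, whose conjugates are scalar\<close>
  have "meq_mod k X (msmul p a (mone p))" using assms(2,3) X by (simp add: mone_def mod_simps)
  then have "meq_mod k Y (msmul p u (mmul p (mmul p Binv (msmul p a (mone p))) B))"
    unfolding h(6) by (rule meq_mod_conj)
  moreover have "msmul p u (mmul p (mmul p Binv (msmul p a (mone p))) B) = msmul p (pmul p u a) (mone p)"
    using h a by (simp add: msmul_simps mmul_assoc)
  ultimately show ?thesis
    by (cases Y rule: prod_cases4) (simp add: mone_def mod_simps)
qed

lemma msim_mvanish_iff: "msim p X Y \<Longrightarrow> mcarrier p X \<Longrightarrow> mvanish k X \<longleftrightarrow> mvanish k Y"
  using msim_mvanish msim_sym by blast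

lemma msim_mscalar_mod_iff: "msim p X Y \<Longrightarrow> mcarrier p X \<Longrightarrow> mscalar_mod k X \<longleftrightarrow> mscalar_mod k Y"
  using msim_mscalar_mod msim_sym msim_closed by blast

lemma msim_msmul: "punit p u \<Longrightarrow> mcarrier p X \<Longrightarrow> msim p X (msmul p u X)"
  by (rule msimI[of u "mone p" "mone p"]) simp_all

lemma mvanish_msmul_ppow: "k \<le> s \<Longrightarrow> mvanish k (msmul p (ppow p s) X)"
  by (cases X rule: prod_cases4) (simp add: mod_mult_left_eq le_imp_power_dvd)

lemma not_mvanish_msmul_ppow:
  assumes "mcarrier p X" "\<not> mvanish 1 X"
  shows "\<not> mvanish (Suc s) (msmul p (ppow p s) X)"
proof -
  have "pmul p (ppow p s) e (Suc s) \<noteq> 0" if "e \<in> padic p" "e 1 \<noteq> 0" for e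
    using ppow_mul_punit_eq_0_iff[of e s "Suc s"] that punit_iff by simp
  then show ?thesis using assms by (cases X rule: prod_cases4) (auto simp del: padic_ops_apply)
qed

lemma msmul_ppow_left_cancel:
  assumes "mcarrier p X" "mcarrier p Y" "msmul p (ppow p s) X = msmul p (ppow p s) Y"
  shows "X = Y"
proof -
  obtain a b c d a' b' c' d' where "X = (a, b, c, d)" "Y = (a', b', c', d')"
    by (cases X rule: prod_cases4, cases Y rule: prod_cases4)
  then show ?thesis using assms ppow_left_cancel[of _ _ s] by auto
qed

text \<open>The exponent \<open>s\<close> in \<open>p ^ s X\<close>, \<open>X\<close> primitive, is the largest \<open>k\<close> with \<open>p ^ s X \<equiv> 0 (mod p ^ k)\<close>.\<close>
lemma msim_content_eq:
  assumes "mcarrier p X" "mcarrier p Y" "\<not> mvanish 1 X" "\<not> mvanish 1 Y"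
    and sim: "msim p (msmul p (ppow p s) X) (msmul p (ppow p t) Y)"
  shows "s = t"
proof -
  have vanish: "mvanish k (msmul p (ppow p s) X) \<longleftrightarrow> mvanish k (msmul p (ppow p t) Y)" for k
    using msim_mvanish_iff[OF sim] assms(1) by simp
  show ?thesis
  proof (rule ccontr)
    assume "s \<noteq> t"
    then consider "Suc s \<le> t" | "Suc t \<le> s" by linarith
    then show False
    proof cases
      case 1
      then have "mvanish (Suc s) (msmul p (ppow p s) X)" using vanish mvanish_msmul_ppow by blast
      then show False using not_mvanish_msmul_ppow assms(1,3) by blast
    next
      case 2
      then have "mvanish (Suc t) (msmul p (ppow p t) Y)" using vanish mvanish_msmul_ppow by blast
      then show False using not_mvanish_msmul_ppow assms(2,4) by blast
    qed
  qed
qed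

lemma msim_ppow_cancel:
  assumes "mcarrier p X" "mcarrier p Y" "msim p (msmul p (ppow p s) X) (msmul p (ppow p s) Y)"
  shows "msim p X Y"
proof -
  obtain u B Binv where h: "punit p u" "mcarrier p B" "mcarrier p Binv" "mmul p B Binv = mone p"
    "mmul p Binv B = mone p"
    and Y: "msmul p (ppow p s) Y = msmul p u (mmul p (mmul p Binv (msmul p (ppow p s) X)) B)"
    using msimE[OF assms(3)] by blast
  have "msmul p (ppow p s) Y = msmul p (ppow p s) (msmul p u (mmul p (mmul p Binv X) B))"
    unfolding Y by (simp add: msmul_simps pmul_commute)
  then have "Y = msmul p u (mmul p (mmul p Binv X) B)"
    using msmul_ppow_left_cancel assms(1,2) h punit_closed by simp
  then show ?thesis using msimI h by blast
qed

lemma matrix_content: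
  assumes "mcarrier p A" "A \<noteq> mzero p"
  obtains s A0 where "mcarrier p A0" "\<not> mvanish 1 A0" "A = msmul p (ppow p s) A0"
    "mvanish 1 A \<Longrightarrow> 1 \<le> s"
proof -
  obtain a b c d where A: "A = (a, b, c, d)" by (cases A rule: prod_cases4)
  have m: "a \<in> padic p" "b \<in> padic p" "c \<in> padic p" "d \<in> padic p" using assms(1) A by auto
  have "\<exists>n. \<not> mvanish n A"
    using assms(2) A by (auto simp: mzero_def fun_eq_iff)
  then obtain s where s: "mvanish s A" "\<not> mvanish (Suc s) A"
    using exists_last_level[of "\<lambda>n. mvanish n A"] A m by auto
  then have z: "a s = 0" "b s = 0" "c s = 0" "d s = 0" using A by auto
  obtain a0 where a0: "a0 \<in> padic p" "a = pmul p (ppow p s) a0" "a (Suc s) \<noteq> 0 \<longrightarrow> a0 1 \<noteq> 0"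
    using padic_divide_ppow[OF m(1) z(1)] by blast
  obtain b0 where b0: "b0 \<in> padic p" "b = pmul p (ppow p s) b0" "b (Suc s) \<noteq> 0 \<longrightarrow> b0 1 \<noteq> 0"
    using padic_divide_ppow[OF m(2) z(2)] by blast
  obtain c0 where c0: "c0 \<in> padic p" "c = pmul p (ppow p s) c0" "c (Suc s) \<noteq> 0 \<longrightarrow> c0 1 \<noteq> 0"
    using padic_divide_ppow[OF m(3) z(3)] by blast
  obtain d0 where d0: "d0 \<in> padic p" "d = pmul p (ppow p s) d0" "d (Suc s) \<noteq> 0 \<longrightarrow> d0 1 \<noteq> 0"
    using padic_divide_ppow[OF m(4) z(4)] by blast
  show ?thesis
  proof (rule that[of "(a0, b0, c0, d0)" s])
    show "\<not> mvanish 1 (a0, b0, c0, d0)" using s(2) A a0(3) b0(3) c0(3) d0(3) by auto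
    show "mvanish 1 A \<Longrightarrow> 1 \<le> s" using s(2) by (cases s) auto
    show "A = msmul p (ppow p s) (a0, b0, c0, d0)" using A a0 b0 c0 d0 by simp
  qed (use a0 b0 c0 d0 in simp)
qed

lemma mscalar_mod_traceless_mvanish:
  assumes "mcarrier p X" "mscalar_mod 1 X" "mtrace X 1 = 0"
  shows "mvanish 1 X"
proof -
  obtain a b c d where X: "X = (a, b, c, d)" by (cases X rule: prod_cases4)
  have a: "a \<in> padic p" using assms(1) X by auto
  have bc: "b 1 = 0" "c 1 = 0" "a 1 = d 1" using assms(2) X by auto
  have "padd p a d 1 = 0" using assms(3) X by simp
  then have "(a 1 + a 1) mod p = 0" using bc by simp
  then have "p dvd 2 * a 1" by (metis mod_0_imp_dvd mult_2)
  then have "p dvd a 1" using p_not_dvd_2 p_dvd_mult_iff by blast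
  then have "a 1 = 0" using padic_residue_mod_p(1)[OF a] by (metis mod_eq_0_iff_dvd)
  then show ?thesis using X bc by simp
qed


lemma mdet_eq_pzero_if_mnilpotent:
  assumes A: "mcarrier p A" and "mnilpotent p A"
  shows "mdet A = pzero p"
proof (rule ccontr)
  assume "mdet A \<noteq> pzero p"
  then have "mdet (mpow p A j) \<noteq> pzero p" for j
    using A by (induction j) (simp_all add: pone_neq_pzero mdet_mmul pmul_eq_pzero_iff)
  moreover have "mdet (mzero p) = pzero p" by (simp add: mzero_def fun_eq_iff)
  ultimately show False using assms(2) unfolding mnilpotent_def by metis
qed

text \<open>With \<open>det A = 0\<close>, Cayley-Hamilton gives \<open>A ^ (j + 1) = tr A ^ j A\<close>, and \<open>Z_p\<close> has no zero divisors.\<close>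
lemma mtrace_eq_pzero_if_mnilpotent:
  assumes A: "mcarrier p A" "mnilpotent p A" and det: "mdet A = pzero p"
  shows "mtrace A = pzero p"
proof (rule ccontr)
  assume tr: "mtrace A \<noteq> pzero p"
  have AA: "mmul p A A = msmul p (mtrace A) A"
    using cayley_hamilton[of A] det A by (cases A rule: prod_cases4) (simp add: mone_def)
  have "\<exists>c\<in>padic p. c \<noteq> pzero p \<and> mpow p A (Suc j) = msmul p c A" for j
  proof (induction j)
    case 0 then show ?case
      using A pone_neq_pzero by (intro bexI[of _ "pone p"]) (simp_all del: padic_ops_apply)
  next
    case (Suc j)
    then obtain c where c: "c \<in> padic p" "c \<noteq> pzero p" "mpow p A (Suc j) = msmul p c A" by blast
    then have "mpow p A (Suc (Suc j)) = msmul p (pmul p c (mtrace A)) A"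
      using AA by (simp add: mmul_msmul_left msmul_msmul)
    moreover have "pmul p c (mtrace A) \<noteq> pzero p" using pmul_eq_pzero_iff c(1,2) tr A by simp
    ultimately show ?case
      using c(1) A by (intro bexI[of _ "pmul p c (mtrace A)"]) (simp_all del: padic_ops_apply)
  qed
  moreover obtain k where k: "mpow p A k = mzero p" using A(2) unfolding mnilpotent_def by blast
  moreover have "k \<noteq> 0" using k pone_neq_pzero by (auto simp: mone_def mzero_def)
  ultimately obtain c where c: "c \<in> padic p" "c \<noteq> pzero p" "mzero p = msmul p c A"
    by (metis not0_implies_Suc)
  obtain a b c' d where Ad: "A = (a, b, c', d)" by (cases A rule: prod_cases4)
  have "pmul p c a = pzero p" "pmul p c d = pzero p"
    using c(3) unfolding Ad mzero_def by (auto simp del: padic_ops_apply)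
  then have "a = pzero p" "d = pzero p" using pmul_eq_pzero_iff c(1,2) A Ad by auto
  then show False using tr Ad by simp
qed

lemma mnilpotent_iff:
  assumes A: "mcarrier p A"
  shows "mnilpotent p A \<longleftrightarrow> mtrace A = pzero p \<and> mdet A = pzero p"
proof
  assume "mtrace A = pzero p \<and> mdet A = pzero p"
  then have "mpow p A 2 = mzero p"
    using cayley_hamilton[of A] A by (cases A rule: prod_cases4) (simp add: numeral_2_eq_2 mzero_def mone_def)
  then show "mnilpotent p A" unfolding mnilpotent_def by blast
qed (use A mdet_eq_pzero_if_mnilpotent mtrace_eq_pzero_if_mnilpotent in blast)

subsection \<open>The core matrices\<close>

definition core_near_one :: "nat \<Rightarrow> padic \<Rightarrow> pmat" where
  "core_near_one r d = (pone p, pmul p (ppow p r) d, ppow p r, pone p)"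

definition core_companion :: "nat \<Rightarrow> padic \<Rightarrow> pmat" where
  "core_companion r d = (pzero p, d, pone p, ppow p r)"

definition core_traceless :: "nat \<Rightarrow> padic \<Rightarrow> pmat" where
  "core_traceless r a = (pzero p, pmul p a (ppow p r), pone p, pzero p)"

lemma core_cases:
  assumes "X \<in> core p \<rho>"
  obtains "X = mone p"
  | r d where "1 \<le> r" "d \<in> padic p" "X = core_near_one r d"
  | r d where "d \<in> padic p" "X = core_companion r d"
  | r a where "a \<in> {pone p, \<rho>}" "X = core_traceless r a"
proof -
  have "madd p (mone p) (msmul p (ppow p r) (pzero p, d, pone p, pzero p)) = core_near_one r d"
    if "d \<in> padic p" for r d
    using that by (simp add: mone_def core_near_one_def)
  moreover have "(pzero p, ppow p r, pone p, pzero p) = core_traceless r (pone p)" for r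
    by (simp add: core_traceless_def)
  ultimately show ?thesis
    using assms that unfolding core_def core_companion_def[symmetric] core_traceless_def[symmetric]
    by blast
qed

lemma core_closed: "punit p \<rho> \<Longrightarrow> X \<in> core p \<rho> \<Longrightarrow> mcarrier p X"
  by (elim core_cases)
    (auto simp: punit_closed core_near_one_def core_companion_def core_traceless_def)

lemma core_primitive: "X \<in> core p \<rho> \<Longrightarrow> \<not> mvanish 1 X"
  by (elim core_cases) (simp_all add: mone_def core_near_one_def core_companion_def core_traceless_def)

lemma mscalar_mod_mone: "mscalar_mod k (mone p)"
  by (simp add: mone_def)

lemma mscalar_mod_core_near_one: "mscalar_mod k (core_near_one r d) \<longleftrightarrow> k \<le> r"
proof
  assume "k \<le> r"
  then have "p ^ r mod p ^ k = 0" by (simp add: le_imp_power_dvd)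
  then show "mscalar_mod k (core_near_one r d)" unfolding core_near_one_def by (simp add: mod_simps)
next
  have "p ^ r mod p ^ k = p ^ r" if "r < k"
    using that p_gt_1 by (simp add: power_strict_increasing)
  then show "mscalar_mod k (core_near_one r d) \<Longrightarrow> k \<le> r"
    unfolding core_near_one_def by (cases "k \<le> r") auto
qed

lemma not_mscalar_mod_core_companion: "\<not> mscalar_mod 1 (core_companion r d)"
  by (simp add: core_companion_def)

lemma not_mscalar_mod_core_traceless: "\<not> mscalar_mod 1 (core_traceless r a)"
  by (simp add: core_traceless_def)

lemma mtrace_core_near_one: "mtrace (core_near_one r d) = padd p (pone p) (pone p)"
  by (simp add: core_near_one_def)

lemma mtrace_core_companion: "mtrace (core_companion r d) = ppow p r"
  by (simp add: core_companion_def)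

lemma mtrace_core_traceless: "mtrace (core_traceless r a) = pzero p"
  by (simp add: core_traceless_def)

lemma msim_mone_core:
  assumes "Y \<in> core p \<rho>" "msim p (mone p) Y"
  shows "Y = mone p"
proof -
  have sk: "mscalar_mod k Y" for k
    using msim_mscalar_mod[OF assms(2)] mscalar_mod_mone by simp
  from assms(1) show ?thesis
  proof (cases rule: core_cases)
    case (2 r d)
    then show ?thesis using sk[of "Suc r"] mscalar_mod_core_near_one by simp
  next
    case (3 r d)
    then show ?thesis using sk[of 1] not_mscalar_mod_core_companion by simp
  next
    case (4 r a)
    then show ?thesis using sk[of 1] not_mscalar_mod_core_traceless by simp
  qed simp
qed

lemma msim_core_near_one:
  assumes "punit p \<rho>" "Y \<in> core p \<rho>" "msim p (core_near_one r d) Y" "1 \<le> r" "d \<in> padic p"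
  shows "Y = core_near_one r d"
proof -
  have X: "mcarrier p (core_near_one r d)" using assms(5) by (simp add: core_near_one_def)
  have sk: "mscalar_mod k Y \<longleftrightarrow> k \<le> r" for k
    using msim_mscalar_mod_iff[OF assms(3) X] mscalar_mod_core_near_one by simp
  obtain u where u: "punit p u" "mtrace Y = pmul p u (mtrace (core_near_one r d))"
    "mdet Y = pmul p (pmul p u u) (mdet (core_near_one r d))"
    using msim_mtrace_mdet[OF assms(3) X] by blast
  show ?thesis
    using assms(2)
  proof (cases rule: core_cases)
    case 1
    then show ?thesis using sk[of "Suc r"] mscalar_mod_mone by simp
  next
    case (2 r' d')
    then have "r' = r" using sk mscalar_mod_core_near_one by (metis le_antisym order_refl)
    \<comment> \<open>both traces are the unit 2, so the scaling is trivial and the determinants agree\<close>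
    have "pmul p (padd p (pone p) (pone p)) u = pmul p (padd p (pone p) (pone p)) (pone p)"
      using u(2) 2 by (simp add: mtrace_core_near_one pmul_commute)
    then have "u = pone p" using punit_left_cancel[OF punit_two] punit_closed[OF u(1)] by simp
    then have "psub (pone p) (pmul p (ppow p (r + r)) d') = psub (pone p) (pmul p (ppow p (r + r)) d)"
      using u(3) 2 \<open>r' = r\<close> assms(5)
      by (simp add: core_near_one_def ppow_add[symmetric] pmul_commute pmul_left_commute)
    then have "pmul p (ppow p (r + r)) d' = pmul p (ppow p (r + r)) d"
      using psub_left_cancel 2 assms(5) by simp
    then have "d' = d" using ppow_left_cancel 2 assms(5) by blast
    then show ?thesis using 2 \<open>r' = r\<close> by simp
  next
    case (3 r' d')
    then show ?thesis using sk[of 1] assms(4) not_mscalar_mod_core_companion by simp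
  next
    case (4 r' a)
    then show ?thesis using sk[of 1] assms(4) not_mscalar_mod_core_traceless by simp
  qed
qed

lemma mdet_core_companion: "d \<in> padic p \<Longrightarrow> mdet (core_companion r d) = psub (pzero p) d"
  by (simp add: core_companion_def)

lemma mdet_core_traceless: "a \<in> padic p \<Longrightarrow> mdet (core_traceless r a) = psub (pzero p) (pmul p (ppow p r) a)"
  by (simp add: core_traceless_def pmul_commute)

lemma msim_core_companion:
  assumes "Y \<in> core p \<rho>" "msim p (core_companion r d) Y" "d \<in> padic p"
  shows "Y = core_companion r d"
proof -
  have X: "mcarrier p (core_companion r d)" using assms(3) by (simp add: core_companion_def)
  have nsc: "\<not> mscalar_mod 1 Y"
    using msim_mscalar_mod_iff[OF assms(2) X, of 1] not_mscalar_mod_core_companion by simp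
  obtain u where u: "punit p u" "mtrace Y = pmul p u (mtrace (core_companion r d))"
    "mdet Y = pmul p (pmul p u u) (mdet (core_companion r d))"
    using msim_mtrace_mdet[OF assms(2) X] by blast
  from assms(1) show ?thesis
  proof (cases rule: core_cases)
    case 1
    then show ?thesis using nsc mscalar_mod_mone by simp
  next
    case (2 r' d')
    then show ?thesis using nsc mscalar_mod_core_near_one by simp
  next
    case (3 r' d')
    have "pmul p (ppow p r') (pone p) = pmul p (ppow p r) u"
      using u(2) 3 punit_closed[OF u(1)] by (simp add: mtrace_core_companion pmul_commute)
    then have "r' = r" "u = pone p" using valuation_unique[OF punit_pone u(1)] by auto
    then have "psub (pzero p) d' = psub (pzero p) d"
      using u(3) 3 assms(3) by (simp add: mdet_core_companion)
    then show ?thesis using psub_left_cancel 3 assms(3) \<open>r' = r\<close> by blast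
  next
    case (4 r' a)
    then have "pmul p (ppow p r) u = pzero p"
      using u(2) by (simp add: mtrace_core_companion mtrace_core_traceless pmul_commute)
    then show ?thesis using ppow_mul_punit_neq_pzero[OF u(1)] by simp
  qed
qed

lemma msim_core_traceless:
  assumes \<rho>: "punit p \<rho>" "\<not> QuadRes p (\<rho> 1)"
    and "Y \<in> core p \<rho>" "msim p (core_traceless r a) Y" "a \<in> {pone p, \<rho>}"
  shows "Y = core_traceless r a"
proof -
  have a: "punit p a" using assms(5) \<rho>(1) punit_pone by auto
  have X: "mcarrier p (core_traceless r a)" using punit_closed[OF a] by (simp add: core_traceless_def)
  have nsc: "\<not> mscalar_mod 1 Y"
    using msim_mscalar_mod_iff[OF assms(4) X, of 1] not_mscalar_mod_core_traceless by simp
  obtain u where u: "punit p u" "mtrace Y = pmul p u (mtrace (core_traceless r a))"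
    "mdet Y = pmul p (pmul p u u) (mdet (core_traceless r a))"
    using msim_mtrace_mdet[OF assms(4) X] by blast
  from assms(3) show ?thesis
  proof (cases rule: core_cases)
    case 1
    then show ?thesis using nsc mscalar_mod_mone by simp
  next
    case (2 r' d')
    then show ?thesis using nsc mscalar_mod_core_near_one by simp
  next
    case (3 r' d')
    then have "ppow p r' = pzero p" using u(2) by (simp add: mtrace_core_companion mtrace_core_traceless)
    then show ?thesis using ppow_neq_pzero by simp
  next
    case (4 r' a')
    have a': "punit p a'" using 4 \<rho>(1) punit_pone by auto
    have "psub (pzero p) (pmul p (ppow p r') a') = psub (pzero p) (pmul p (ppow p r) (pmul p (pmul p u u) a))"
      using u(3) 4 punit_closed[OF a] punit_closed[OF a']
      by (simp add: mdet_core_traceless pmul_psub_pzero pmul_left_commute)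
    then have "pmul p (ppow p r') a' = pmul p (ppow p r) (pmul p (pmul p u u) a)"
      using psub_left_cancel punit_closed[OF a] punit_closed[OF a'] punit_closed[OF u(1)] by simp
    then have r': "r' = r" and a'_eq: "a' = pmul p (pmul p u u) a"
      using valuation_unique[OF a' punit_pmul[OF punit_pmul[OF u(1) u(1)] a]] by auto
    then have "a' = a" using square_class_rep_unique[OF \<rho> u(1)] assms(5) 4 by blast
    then show ?thesis using 4 r' by simp
  qed
qed

lemma core_unique:
  assumes \<rho>: "punit p \<rho>" "\<not> QuadRes p (\<rho> 1)"
    and X: "X \<in> core p \<rho>" and Y: "Y \<in> core p \<rho>" and sim: "msim p X Y"
  shows "X = Y"
  using X
proof (cases rule: core_cases)
  case 1
  then show ?thesis using msim_mone_core[OF Y] sim by simp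
next
  case (2 r d)
  then show ?thesis using msim_core_near_one[OF \<rho>(1) Y, of r d] sim by simp
next
  case (3 r d)
  then show ?thesis using msim_core_companion[OF Y, of r d] sim by simp
next
  case (4 r a)
  then show ?thesis using msim_core_traceless[OF \<rho> Y, of r a] sim by simp
qed

subsection \<open>Existence of normal forms\<close>

lemma msim_msmul_both:
  assumes "msim p X Y"
  shows "msim p (msmul p c X) (msmul p c Y)"
proof -
  obtain u B Binv where h: "punit p u" "mcarrier p B" "mcarrier p Binv" "mmul p B Binv = mone p"
    "mmul p Binv B = mone p" "Y = msmul p u (mmul p (mmul p Binv X) B)"
    using msimE[OF assms] by blast
  have "msmul p c Y = msmul p u (mmul p (mmul p Binv (msmul p c X)) B)"
    unfolding h(6) by (simp add: msmul_simps pmul_commute)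
  then show ?thesis using msimI h(1-5) by blast
qed

lemma msim_companion:
  assumes "mcarrier p X" "\<not> mscalar_mod 1 X"
  shows "msim p X (companion X)"
proof -
  obtain v1 v2 where "v1 \<in> padic p" "v2 \<in> padic p" "punit p (mdet (cyclic_basis X v1 v2))"
    using cyclic_vector_exists[OF assms] by blast
  then obtain B Binv where B: "mcarrier p B" "mcarrier p Binv" "mmul p B Binv = mone p"
    "mmul p Binv B = mone p" "mmul p (mmul p Binv X) B = companion X"
    using companion_conj[OF assms(1)] by blast
  show ?thesis by (rule msimI[OF punit_pone B(1-4)]) (simp add: B(5) assms(1) companion_def)
qed

lemma msim_companion_msmul:
  assumes "mcarrier p X" "\<not> mscalar_mod 1 X" "punit p u"
  shows "msim p X (companion (msmul p u X))"
proof -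
  have sim: "msim p X (msmul p u X)" using msim_msmul[OF assms(3,1)] .
  then have "\<not> mscalar_mod 1 (msmul p u X)" using msim_mscalar_mod_iff assms(1,2) by blast
  then show ?thesis
    using msim_trans[OF sim msim_companion assms(1)] assms(1,3) punit_closed by simp
qed

lemma core_exists_trace_nonzero:
  assumes "mcarrier p A0" "\<not> mscalar_mod 1 A0" "mtrace A0 \<noteq> pzero p"
  shows "\<exists>C\<in>core p \<rho>. msim p A0 C"
proof -
  obtain r w where w: "punit p w" "mtrace A0 = pmul p (ppow p r) w"
    using padic_valuation_factor[OF mtrace_closed[OF assms(1)] assms(3)] by blast
  obtain u where u: "punit p u" "pmul p u w = pone p" using punit_inverse[OF w(1)] by metis
  have "pmul p u (mtrace A0) = ppow p r" unfolding w(2) by (subst pmul_left_commute) (simp add: u(2))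
  then have "companion (msmul p u A0) = core_companion r (pneg (pmul p (pmul p u u) (mdet A0)))"
    by (simp add: companion_msmul core_companion_def)
  moreover have "pneg (pmul p (pmul p u u) (mdet A0)) \<in> padic p"
    using assms(1) punit_closed[OF u(1)] by simp
  then have "core_companion r (pneg (pmul p (pmul p u u) (mdet A0))) \<in> core p \<rho>"
    unfolding core_def core_companion_def by blast
  ultimately show ?thesis using msim_companion_msmul[OF assms(1,2) u(1)] by metis
qed

lemma core_exists_traceless:
  assumes \<rho>: "punit p \<rho>" "\<not> QuadRes p (\<rho> 1)"
    and A0: "mcarrier p A0" "\<not> mscalar_mod 1 A0" "mtrace A0 = pzero p" "mdet A0 \<noteq> pzero p"
  shows "\<exists>C\<in>core p \<rho>. msim p A0 C"
proof -
  have "pneg (mdet A0) \<noteq> pzero p" using pneg_pneg[OF mdet_closed[OF A0(1)]] A0(4) by force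
  then obtain r w where w: "punit p w" "pneg (mdet A0) = pmul p (ppow p r) w"
    using padic_valuation_factor[OF pneg_closed[OF mdet_closed[OF A0(1)]]] by blast
  obtain u e where u: "punit p u" "e \<in> {pone p, \<rho>}" "pmul p (pmul p u u) w = e"
    using punit_square_class[OF \<rho> w(1)] by blast
  have "pneg (pmul p (pmul p u u) (mdet A0)) = pmul p (ppow p r) e"
    unfolding pneg_pmul w(2) u(3)[symmetric] by (rule pmul_left_commute)
  then have "companion (msmul p u A0) = core_traceless r e"
    using A0(3) by (simp add: companion_msmul core_traceless_def pmul_commute)
  moreover have "core_traceless r e \<in> core p \<rho>"
    using u(2) unfolding core_def core_traceless_def by (auto simp: pmul_commute)
  ultimately show ?thesis using msim_companion_msmul[OF A0(1,2) u(1)] by metis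
qed

lemma core_exists_one_plus:
  assumes M: "mcarrier p M" "mvanish 1 M" "mtrace M = pzero p"
  shows "\<exists>C\<in>core p \<rho>. msim p (madd p (mone p) M) C"
proof (cases "M = mzero p")
  case True
  then have "madd p (mone p) M = mone p" by (simp add: mone_def mzero_def)
  then show ?thesis using msim_msmul[OF punit_pone mone_closed] unfolding core_def by auto
next
  case False
  obtain k M1 where M1: "mcarrier p M1" "\<not> mvanish 1 M1" "M = msmul p (ppow p k) M1" "1 \<le> k"
    using matrix_content[OF M(1) False] M(2) by metis
  have "pmul p (ppow p k) (mtrace M1) = pmul p (ppow p k) (pzero p)"
    using M(3) M1(3) by (simp add: mtrace_msmul)
  then have tr: "mtrace M1 = pzero p" using ppow_left_cancel M1(1) by simp
  then have "\<not> mscalar_mod 1 M1" using mscalar_mod_traceless_mvanish[OF M1(1)] M1(2) by auto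
  then obtain B Binv where B: "mcarrier p B" "mcarrier p Binv" "mmul p B Binv = mone p"
    "mmul p Binv B = mone p" "mmul p (mmul p Binv M1) B = companion M1"
    using cyclic_vector_exists[OF M1(1)] companion_conj[OF M1(1)] by metis
  define C where "C = mmul p (mmul p Binv (madd p (mone p) M)) B"
  have "C = madd p (mone p) (msmul p (ppow p k) (companion M1))"
    unfolding C_def mmul_madd_conj M1(3) using B by (simp add: msmul_simps mmul_assoc)
  also have "\<dots> \<in> core p \<rho>"
    using M1(4) pneg_closed[OF mdet_closed[OF M1(1)]] unfolding companion_def tr core_def by blast
  finally have "C \<in> core p \<rho>" .
  moreover have "msim p (madd p (mone p) M) C"
    unfolding C_def by (rule msimI[OF punit_pone B(1-4)]) (simp add: M(1) B(1,2))
  ultimately show ?thesis by blast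
qed

text \<open>A primitive matrix that is scalar modulo \<open>p\<close> has unit trace; rescaled to trace \<open>2\<close> it is
  \<open>1 + M\<close> with \<open>M\<close> traceless and scalar, hence zero, modulo \<open>p\<close>.\<close>
lemma core_exists_scalar_mod_p:
  assumes A0: "mcarrier p A0" "\<not> mvanish 1 A0" "mscalar_mod 1 A0"
  shows "\<exists>C\<in>core p \<rho>. msim p A0 C"
proof -
  define two where "two = padd p (pone p) (pone p)"
  have "punit p (mtrace A0)"
    using mscalar_mod_traceless_mvanish[OF A0(1,3)] A0(1,2) punit_iff by auto
  then obtain t where t: "punit p t" "pmul p t (mtrace A0) = pone p"
    using punit_inverse by metis
  define u where "u = pmul p two t"
  have u: "punit p u" unfolding u_def two_def using punit_pmul[OF punit_two t(1)] .
  define A1 where "A1 = msmul p u A0"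
  have A1: "mcarrier p A1" "msim p A0 A1"
    unfolding A1_def using A0(1) u msim_msmul punit_closed by simp_all
  define M where "M = madd p A1 (msmul p (pneg (pone p)) (mone p))"
  have M: "mcarrier p M" unfolding M_def using A1 by simp
  have A1_eq: "A1 = madd p (mone p) M"
    unfolding M_def using A1(1) by (cases A1 rule: prod_cases4) (simp add: mone_def fun_eq_iff mod_simps)
  have "mtrace A1 = two"
    unfolding A1_def u_def two_def using t(2) by (simp add: mtrace_msmul pmul_assoc)
  then have trM: "mtrace M = pzero p"
    unfolding M_def two_def by (simp add: mtrace_madd mtrace_msmul fun_eq_iff mone_def mod_simps)
  have "mscalar_mod 1 M" using A0(3) unfolding M_def A1_def
    by (cases A0 rule: prod_cases4) (simp add: mone_def mod_simps)
  then have "mvanish 1 M" using mscalar_mod_traceless_mvanish[OF M] trM by simp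
  then show ?thesis
    using core_exists_one_plus[OF M _ trM] msim_trans[OF A1(2)] A0(1) A1_eq by metis
qed

lemma core_exists:
  assumes \<rho>: "punit p \<rho>" "\<not> QuadRes p (\<rho> 1)"
    and A0: "mcarrier p A0" "\<not> mvanish 1 A0" "mtrace A0 \<noteq> pzero p \<or> mdet A0 \<noteq> pzero p"
  shows "\<exists>C\<in>core p \<rho>. msim p A0 C"
proof (cases "mscalar_mod 1 A0")
  case True
  then show ?thesis using core_exists_scalar_mod_p A0(1,2) by blast
next
  case False
  then show ?thesis
    using core_exists_trace_nonzero[OF A0(1) False] core_exists_traceless[OF \<rho> A0(1) False] A0(3)
    by blast
qed

lemma nonnil_normal_exists:
  assumes \<rho>: "punit p \<rho>" "\<not> QuadRes p (\<rho> 1)"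
    and A: "mcarrier p A" "\<not> mnilpotent p A"
  shows "\<exists>C. C \<in> nonnil_normal p \<rho> \<and> msim p A C"
proof -
  have "mnilpotent p (mzero p)" using mnilpotent_iff[of "mzero p"] by (simp add: mzero_def fun_eq_iff)
  then have "A \<noteq> mzero p" using A(2) by blast
  then obtain s A0 where A0: "mcarrier p A0" "\<not> mvanish 1 A0" "A = msmul p (ppow p s) A0"
    using matrix_content[OF A(1)] by metis
  have "mtrace A0 \<noteq> pzero p \<or> mdet A0 \<noteq> pzero p"
    using A mnilpotent_iff A0(3) by (auto simp: mtrace_msmul mdet_msmul)
  then obtain C where "C \<in> core p \<rho>" "msim p A0 C" using core_exists[OF \<rho> A0(1,2)] by blast
  then show ?thesis
    using msim_msmul_both[of A0 C "ppow p s"] A0(3) unfolding nonnil_normal_def by blast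
qed

lemma nonnil_normal_unique:
  assumes \<rho>: "punit p \<rho>" "\<not> QuadRes p (\<rho> 1)" and A: "mcarrier p A"
    and C1: "C1 \<in> nonnil_normal p \<rho>" "msim p A C1" and C2: "C2 \<in> nonnil_normal p \<rho>" "msim p A C2"
  shows "C1 = C2"
proof -
  obtain s X where X: "C1 = msmul p (ppow p s) X" "X \<in> core p \<rho>"
    using C1(1) unfolding nonnil_normal_def by blast
  obtain t Y where Y: "C2 = msmul p (ppow p t) Y" "Y \<in> core p \<rho>"
    using C2(1) unfolding nonnil_normal_def by blast
  have XY: "mcarrier p X" "mcarrier p Y" using core_closed \<rho>(1) X Y by auto
  have "msim p C1 C2" using msim_trans[OF msim_sym[OF C1(2) A] C2(2)] X(1) XY(1) by simp
  then have sim: "msim p (msmul p (ppow p s) X) (msmul p (ppow p t) Y)" using X Y by simp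
  then have "s = t" using msim_content_eq[OF XY core_primitive core_primitive] X Y by blast
  then have "X = Y" using core_unique[OF \<rho> X(2) Y(2)] msim_ppow_cancel[OF XY] sim by simp
  then show ?thesis using X Y \<open>s = t\<close> by simp
qed

lemma nil_normal_exists:
  assumes A: "mcarrier p A" "mnilpotent p A"
  shows "\<exists>C. C \<in> nil_normal p \<and> msim p A C"
proof (cases "A = mzero p")
  case True
  then have "msim p A (mzero p)" using msim_msmul[OF punit_pone A(1)] by simp
  then show ?thesis unfolding nil_normal_def by blast
next
  case False
  obtain s A0 where A0: "mcarrier p A0" "\<not> mvanish 1 A0" "A = msmul p (ppow p s) A0"
    using matrix_content[OF A(1) False] by metis
  have "mtrace A = pzero p" "mdet A = pzero p" using mnilpotent_iff A by auto
  then have "pmul p (ppow p s) (mtrace A0) = pmul p (ppow p s) (pzero p)"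
    and "pmul p (ppow p (s + s)) (mdet A0) = pzero p"
    using A0(3) by (simp_all add: mtrace_msmul mdet_msmul ppow_add)
  then have tr: "mtrace A0 = pzero p" and det: "mdet A0 = pzero p"
    using ppow_left_cancel[OF mtrace_closed[OF A0(1)] pzero_closed]
      pmul_eq_pzero_iff[OF ppow_closed mdet_closed[OF A0(1)]] ppow_neq_pzero by blast+
  have "\<not> mscalar_mod 1 A0" using mscalar_mod_traceless_mvanish[OF A0(1)] A0(2) tr by auto
  then have "msim p A0 (pzero p, pzero p, pone p, pzero p)"
    using msim_companion[OF A0(1)] tr det by (simp add: companion_def)
  then show ?thesis
    using msim_msmul_both[of A0 _ "ppow p s"] A0(3) unfolding nil_normal_def by blast
qed

lemma nil_normal_unique:
  assumes A: "mcarrier p A" and C1: "C1 \<in> nil_normal p" "msim p A C1"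
    and C2: "C2 \<in> nil_normal p" "msim p A C2"
  shows "C1 = C2"
proof -
  define N where "N = (pzero p, pzero p, pone p, pzero p)"
  have N: "mcarrier p N" "\<not> mvanish 1 N" unfolding N_def by simp_all
  have C1_closed: "mcarrier p C1" using C1(1) unfolding nil_normal_def by auto
  have sim: "msim p C1 C2" using msim_trans[OF msim_sym[OF C1(2) A] C2(2) C1_closed] .
  have zero: "mvanish k (mzero p)" for k by (simp add: mzero_def)
  consider "C1 = mzero p" "C2 = mzero p" | s where "C1 = mzero p" "C2 = msmul p (ppow p s) N"
    | s where "C1 = msmul p (ppow p s) N" "C2 = mzero p"
    | s t where "C1 = msmul p (ppow p s) N" "C2 = msmul p (ppow p t) N"
    using C1(1) C2(1) unfolding nil_normal_def N_def by blast
  then show ?thesis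
  proof cases
    case (2 s)
    then show ?thesis
      using msim_mvanish_iff[OF sim C1_closed, of "Suc s"] zero not_mvanish_msmul_ppow[OF N, of s] by simp
  next
    case (3 s)
    then show ?thesis
      using msim_mvanish_iff[OF sim C1_closed, of "Suc s"] zero not_mvanish_msmul_ppow[OF N, of s] by simp
  next
    case (4 s t)
    then show ?thesis using msim_content_eq[OF N(1) N(1) N(2) N(2), of s t] sim by simp
  qed simp
qed

end

theorem mainTheorem19:
  fixes p :: int
  assumes "prime p" and "odd p"
  shows "(\<forall>A. mcarrier p A \<and> mnilpotent p A \<longrightarrow> (\<exists>!C. C \<in> nil_normal p \<and> msim p A C))
       \<and> (\<forall>\<rho>. punit p \<rho> \<and> \<not> QuadRes p (\<rho> 1) \<longrightarrow>
            (\<forall>A. mcarrier p A \<and> \<not> mnilpotent p A \<longrightarrow> (\<exists>!C. C \<in> nonnil_normal p \<rho> \<and> msim p A C)))"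
proof -
  interpret odd_prime p using assms by unfold_locales
  show ?thesis
  proof (intro conjI allI impI)
    fix A assume "mcarrier p A \<and> mnilpotent p A"
    then show "\<exists>!C. C \<in> nil_normal p \<and> msim p A C"
      using nil_normal_exists[of A] nil_normal_unique[of A] by (intro ex_ex1I) blast+
  next
    fix \<rho> A assume "punit p \<rho> \<and> \<not> QuadRes p (\<rho> 1)" "mcarrier p A \<and> \<not> mnilpotent p A"
    then show "\<exists>!C. C \<in> nonnil_normal p \<rho> \<and> msim p A C"
      using nonnil_normal_exists[of \<rho> A] nonnil_normal_unique[of \<rho> A] by (intro ex_ex1I) blast+
  qed
qed

end
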